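(* For each $\lambda\in\Lambda^{\bullet}(n,r)$ there is an isomorphism of $U_0(\mathfrak{gl}_n)$-modules $\Psi_{n,r}(S_\lambda)\cong D_{\lambda^+}$.
   Context: $\Lambda^\bullet(n,r)$ is the set of weak compositions $\lambda$ of $r$ with $n$ parts such that $\lambda_i=0$ forces $\lambda_j=0$ for $j>i$. $\lambda^+$ is the strong composition obtained by deleting the zeros of $\lambda$. $\mathbf S_0(n,r)$ is the complex $0$-Schur algebra, with Jensen–Su standard basis $\{e_A\}$ indexed by $n\times n$ nonnegative integer matrices with entry sum $r$; $k_\lambda=e_{\mathrm{diag}(\lambda)}$; $e_i,f_i$ are the Chevalley-type generators. $P_\lambda$ is the Jensen–Su–Yang projective indecomposable module with basis $B^\lambda$. $S_\lambda=P_\lambda/N_\lambda$, where $N_\lambda$ is the span of $B^\lambda\setminus\beta^\lambda$, $\beta^\lambda=\{e_A:A \text{ column block diagonal},\ \mathrm{co}(A)=\lambda\}$, and $A$ is column block diagonal if $a_{i,j}>0$ implies $a_{i',s}=0$ for $i'\le i,s>j$. The $S_\lambda$ for $\lambda\in\Lambda^\bullet(n,r)$ are the simple $\mathbf S_0(n,r)$-modules. $\mathbf H_r(0)$ is the $0$-Hecke algebra over $\mathbb C$ (generators $\bar\pi_1,\dots,\bar\pi_{r-1}$, $\bar\pi_i^2=-\bar\pi_i$, braid relations). $V_0^{\otimes r}$ with $V_0=\mathbb C^n$ is a right $\mathbf H_r(0)$-module via $\mathbf v\bar\pi_i=$ ($\mathbf v$ with factors $i,i+1$ swapped if $k_i<k_{i+1}$;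 $0$ if $k_i=k_{i+1}$; $-\mathbf v$ if $k_i>k_{i+1}$). It is a left module over the degenerate quantum group $U_0(\mathfrak{gl}_n)$ of Krob–Thibon via $\mathbf e_i\mapsto E_{i,i+1}$, $\mathbf f_i\mapsto E_{i+1,i}$, $\mathbf k_i\mapsto\sum_{j\ne i}E_{jj}$ on $V_0$ and the coproduct $\Delta(\mathbf e_i)=1\otimes\mathbf e_i+\mathbf e_i\otimes\mathbf k_i$, $\Delta(\mathbf f_i)=\mathbf k_{i+1}\otimes\mathbf f_i+\mathbf f_i\otimes1$, $\Delta(\mathbf k_i)=\mathbf k_i\otimes\mathbf k_i$. The two actions commute. $\mathbf S_0(n,r)\cong\mathrm{End}_{\mathbf H_r(0)}(V_0^{\otimes r})$ (the standard identification of the $0$-Schur algebra as endomorphism algebra of tensor space). $\psi_{n,r}:U_0(\mathfrak{gl}_n)\to\mathbf S_0(n,r)$ is the induced homomorphism; it sends $\mathbf e_i\mapsto e_i$, $\mathbf f_i\mapsto f_i$, $\mathbf k_i\mapsto\sum_{\mu_i=0}k_\mu$. $\Psi_{n,r}:\mathbf S_0(n,r)\text{-mod}\to U_0(\mathfrak{gl}_n)\text{-mod}$ is pullback along $\psi_{n,r}$. For a strong composition $\alpha$ of $r$, $\mathrm{set}(\alpha)=\{\alpha_1,\alpha_1+\alpha_2,\dots\}\subseteq[r-1]$. $F_\alpha$ is the one-dimensional $\mathbf H_r(0)$-module with $\bar\pi_i$ acting by $-1$ if $i\in\mathrm{set}(\alpha)$ and by $0$ otherwise. $D_\alpha:=V_0^{\otimes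 r}\otimes_{\mathbf H_r(0)}F_\alpha$ as a $U_0(\mathfrak{gl}_n)$-module. *)

theory Defs
  imports Complex_Main
begin

text \<open>Letters of words (basis vectors of V_0 = C^n) are 1..n; a word of length r
  indexes the basis vector v_{k_1} (x) ... (x) v_{k_r} of the tensor space.\<close>

definition words :: "nat \<Rightarrow> nat \<Rightarrow> nat list set" where
  "words n r = {k. length k = r \<and> set k \<subseteq> {1..n}}"

definition Mat :: "nat \<Rightarrow> nat \<Rightarrow> (nat \<Rightarrow> nat \<Rightarrow> nat) set" where
  "Mat n r = {A. (\<forall>i j. A i j \<noteq> 0 \<longrightarrow> i \<in> {1..n} \<and> j \<in> {1..n})
                 \<and> (\<Sum>i\<in>{1..n}. \<Sum>j\<in>{1..n}. A i j) = r}"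

definition ro :: "nat \<Rightarrow> (nat \<Rightarrow> nat \<Rightarrow> nat) \<Rightarrow> nat \<Rightarrow> nat" where
  "ro n A i = (\<Sum>j\<in>{1..n}. A i j)"

definition co :: "nat \<Rightarrow> (nat \<Rightarrow> nat \<Rightarrow> nat) \<Rightarrow> nat \<Rightarrow> nat" where
  "co n A j = (\<Sum>i\<in>{1..n}. A i j)"

definition Lambda_bullet :: "nat \<Rightarrow> nat \<Rightarrow> nat list set" where
  "Lambda_bullet n r = {lam. length lam = n \<and> sum_list lam = r \<and>
      (\<forall>i j. i < j \<and> j < n \<and> lam ! i = 0 \<longrightarrow> lam ! j = 0)}"

definition strong :: "nat list \<Rightarrow> nat list" where
  "strong lam = filter (\<lambda>x. x \<noteq> 0) lam"

definition comp_set :: "nat list \<Rightarrow> nat set" where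
  "comp_set alpha = {sum_list (take j alpha) | j. 1 \<le> j \<and> j < length alpha}"

definition col_block_diag :: "(nat \<Rightarrow> nat \<Rightarrow> nat) \<Rightarrow> bool" where
  "col_block_diag A \<longleftrightarrow> (\<forall>i j. A i j > 0 \<longrightarrow> (\<forall>i' s. i' \<le> i \<and> s > j \<longrightarrow> A i' s = 0))"

text \<open>beta^lambda, as a set of matrices A (standing for e_A).\<close>
definition beta :: "nat \<Rightarrow> nat \<Rightarrow> nat list \<Rightarrow> (nat \<Rightarrow> nat \<Rightarrow> nat) set" where
  "beta n r lam = {A \<in> Mat n r. col_block_diag A \<and> (\<forall>j\<in>{1..n}. co n A j = lam ! (j - 1))}"

text \<open>Vectors of the tensor space are functions  nat list => complex  (coefficient of
  the basis vector v_k), supported on words n r.  Linear maps are given by matrices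
  M l k = coefficient of v_l in the image of v_k.\<close>

type_synonym vec = "nat list \<Rightarrow> complex"

definition single :: "nat list \<Rightarrow> vec" where
  "single w = (\<lambda>l. if l = w then 1 else 0)"

text \<open>v_a (x) y\<close>
definition tens :: "nat \<Rightarrow> vec \<Rightarrow> vec" where
  "tens a y = (\<lambda>l. case l of [] \<Rightarrow> 0 | b # l' \<Rightarrow> if b = a then y l' else 0)"

text \<open>Action of U_0(gl_n) generators on basis vectors via the coproduct
  Delta(k_i) = k_i (x) k_i, Delta(e_i) = 1 (x) e_i + e_i (x) k_i,
  Delta(f_i) = k_{i+1} (x) f_i + f_i (x) 1, splitting off the first tensor factor;
  on V_0: e_i = E_{i,i+1}, f_i = E_{i+1,i}, k_i = sum_{j ~= i} E_{jj}.\<close>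
fun kact :: "nat \<Rightarrow> nat list \<Rightarrow> vec" where
  "kact i [] = single []"
| "kact i (a # w) = (if a = i then (\<lambda>_. 0) else tens a (kact i w))"

fun eact :: "nat \<Rightarrow> nat list \<Rightarrow> vec" where
  "eact i [] = (\<lambda>_. 0)"
| "eact i (a # w) = (\<lambda>l. tens a (eact i w) l
                        + (if a = Suc i then tens i (kact i w) l else 0))"

fun fact_act :: "nat \<Rightarrow> nat list \<Rightarrow> vec" where
  "fact_act i [] = (\<lambda>_. 0)"
| "fact_act i (a # w) = (\<lambda>l. (if a = Suc i then 0 else tens a (fact_act i w) l)
                        + (if a = i then tens (Suc i) (single w) l else 0))"

datatype gen = E nat | F nat | K nat

text \<open>Chevalley generators of U_0(gl_n): e_i, f_i (1 <= i < n), k_i (1 <= i <= n).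
  A U_0(gl_n)-module isomorphism is the same as a linear isomorphism intertwining them.\<close>
definition gens :: "nat \<Rightarrow> gen set" where
  "gens n = {E i | i. 1 \<le> i \<and> i < n} \<union> {F i | i. 1 \<le> i \<and> i < n} \<union> {K i | i. 1 \<le> i \<and> i \<le> n}"

definition rho :: "gen \<Rightarrow> nat list \<Rightarrow> nat list \<Rightarrow> complex" where
  "rho g l k = (case g of E i \<Rightarrow> eact i k | F i \<Rightarrow> fact_act i k | K i \<Rightarrow> kact i k) l"

text \<open>Matrix of the right action of pibar_i (1 <= i <= r-1) of H_r(0):
  v pibar_i = v with factors i,i+1 swapped if k_i < k_{i+1}; 0 if equal; -v if k_i > k_{i+1}.\<close>
definition Pi :: "nat \<Rightarrow> nat list \<Rightarrow> nat list \<Rightarrow> complex" where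
  "Pi i l k = (let a = k ! (i - 1); b = k ! i in
      if a < b then (if l = k[i - 1 := b, i := a] then 1 else 0)
      else if a = b then 0
      else (if l = k then -1 else 0))"

section \<open>The 0-Schur algebra as End_{H_r(0)}(V_0^{(x) r}) and its standard basis\<close>

definition is_H_endo :: "nat \<Rightarrow> nat \<Rightarrow> (nat list \<Rightarrow> nat list \<Rightarrow> complex) \<Rightarrow> bool" where
  "is_H_endo n r M \<longleftrightarrow>
     (\<forall>l k. (l \<notin> words n r \<or> k \<notin> words n r) \<longrightarrow> M l k = 0) \<and>
     (\<forall>i\<in>{1..<r}. \<forall>l\<in>words n r. \<forall>k\<in>words n r.
        (\<Sum>m\<in>words n r. M l m * Pi i m k) = (\<Sum>m\<in>words n r. Pi i l m * M m k))"

definition content :: "nat \<Rightarrow> nat list \<Rightarrow> nat \<Rightarrow> nat" where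
  "content n k j = length (filter (\<lambda>x. x = j) k)"

definition sorted_word :: "nat \<Rightarrow> (nat \<Rightarrow> nat) \<Rightarrow> nat list" where
  "sorted_word n mu = concat (map (\<lambda>j. replicate (mu j) j) [1..<Suc n])"

definition block :: "(nat \<Rightarrow> nat) \<Rightarrow> nat \<Rightarrow> nat list \<Rightarrow> nat list" where
  "block mu j l = take (mu j) (drop (\<Sum>t\<in>{1..<j}. mu t) l)"

text \<open>Image of the generating (increasing) vector of weight co(A) under e_A: the sum of all
  v_l such that block j of l (w.r.t. co(A)) contains letter i exactly a_{ij} times
  (the double-coset sum).\<close>
definition yA :: "nat \<Rightarrow> nat \<Rightarrow> (nat \<Rightarrow> nat \<Rightarrow> nat) \<Rightarrow> vec" where
  "yA n r A = (\<lambda>l. if l \<in> words n r \<and>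
        (\<forall>i\<in>{1..n}. \<forall>j\<in>{1..n}. length (filter (\<lambda>x. x = i) (block (co n A) j l)) = A i j)
      then 1 else 0)"

definition eA :: "nat \<Rightarrow> nat \<Rightarrow> (nat \<Rightarrow> nat \<Rightarrow> nat) \<Rightarrow> nat list \<Rightarrow> nat list \<Rightarrow> complex" where
  "eA n r A = (THE M. is_H_endo n r M \<and>
      (\<forall>l. M l (sorted_word n (co n A)) = yA n r A l) \<and>
      (\<forall>k\<in>words n r. (\<exists>j\<in>{1..n}. content n k j \<noteq> co n A j) \<longrightarrow> (\<forall>l. M l k = 0)))"

definition coord :: "nat \<Rightarrow> nat \<Rightarrow> (nat list \<Rightarrow> nat list \<Rightarrow> complex)
                      \<Rightarrow> (nat \<Rightarrow> nat \<Rightarrow> nat) \<Rightarrow> complex" where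
  "coord n r M = (THE c. (\<forall>A. A \<notin> Mat n r \<longrightarrow> c A = 0) \<and>
      M = (\<lambda>l m. \<Sum>A\<in>Mat n r. c A * eA n r A l m))"

text \<open>psi_{n,r}(g) as element of End_{H_r(0)}: the action matrix rho g.  Action of a generator
  on the simple module S_lambda = P_lambda / N_lambda in the basis beta^lambda:
  g . [e_A] = sum over B in beta^lambda of (coefficient of e_B in psi(g) e_A) [e_B]
  (the remaining basis vectors of P_lambda span N_lambda).\<close>
definition S_act :: "nat \<Rightarrow> nat \<Rightarrow> gen \<Rightarrow> (nat \<Rightarrow> nat \<Rightarrow> nat) \<Rightarrow> (nat \<Rightarrow> nat \<Rightarrow> nat) \<Rightarrow> complex" where
  "S_act n r g B A = coord n r (\<lambda>l m. \<Sum>k\<in>words n r. rho g l k * eA n r A k m) B"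

text \<open>D_alpha is the quotient of the tensor space by the span W_alpha of the vectors
  v_k pibar_i - chi_alpha(pibar_i) v_k, where chi_alpha(pibar_i) = -1 if i in set(alpha), else 0.\<close>
definition chi :: "nat list \<Rightarrow> nat \<Rightarrow> complex" where
  "chi alpha i = (if i \<in> comp_set alpha then -1 else 0)"

definition relvec :: "nat list \<Rightarrow> nat \<Rightarrow> nat list \<Rightarrow> vec" where
  "relvec alpha i k = (\<lambda>l. Pi i l k - chi alpha i * single k l)"

definition in_W :: "nat \<Rightarrow> nat \<Rightarrow> nat list \<Rightarrow> vec \<Rightarrow> bool" where
  "in_W n r alpha x \<longleftrightarrow> (\<exists>c :: nat \<times> nat list \<Rightarrow> complex.
      \<forall>l. x l = (\<Sum>p\<in>{1..<r} \<times> words n r. c p * relvec alpha (fst p) (snd p) l))"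

text \<open>Psi_{n,r}(S_lambda) isomorphic to D_alpha as U_0(gl_n)-modules: there is a linear map
  Phi from the tensor space onto S_lambda (matrix Phi B k, B in beta^lambda, k a word) with kernel
  exactly W_alpha and intertwining all generators; by the first isomorphism theorem this is
  the same as a U_0(gl_n)-module isomorphism D_alpha = (tensor space)/W_alpha -> S_lambda.\<close>
definition S_iso_D :: "nat \<Rightarrow> nat \<Rightarrow> nat list \<Rightarrow> nat list \<Rightarrow> bool" where
  "S_iso_D n r lam alpha \<longleftrightarrow> (\<exists>Phi :: (nat \<Rightarrow> nat \<Rightarrow> nat) \<Rightarrow> nat list \<Rightarrow> complex.
     (\<forall>y :: (nat \<Rightarrow> nat \<Rightarrow> nat) \<Rightarrow> complex. \<exists>x :: vec.
        \<forall>B\<in>beta n r lam. (\<Sum>k\<in>words n r. Phi B k * x k) = y B) \<and>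
     (\<forall>x :: vec. (\<forall>k. k \<notin> words n r \<longrightarrow> x k = 0) \<longrightarrow>
        ((\<forall>B\<in>beta n r lam. (\<Sum>k\<in>words n r. Phi B k * x k) = 0) \<longleftrightarrow> in_W n r alpha x)) \<and>
     (\<forall>g\<in>gens n. \<forall>B\<in>beta n r lam. \<forall>k\<in>words n r.
        (\<Sum>A\<in>beta n r lam. S_act n r g B A * Phi A k) = (\<Sum>l\<in>words n r. Phi B l * rho g l k)))"

end

theory Submission
  imports Defs "HOL-Library.Multiset"
begin

text \<open>The simple module \<open>S\<^sub>\<lambda>\<close> has basis \<open>[e\<^sub>B]\<close>, \<open>B \<in> \<beta>\<^sup>\<lambda>\<close>, and \<open>B\<close> is determined by its
  representative word, which is sorted and strictly increasing across the block boundaries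
  \<open>set(\<lambda>\<^sup>+)\<close>.  The isomorphism sends \<open>v\<^sub>k\<close> to \<open>\<Sum>\<^sub>B \<Phi>\<^sub>B(k) [e\<^sub>B]\<close>, where \<open>\<Phi>\<^sub>B(k)\<close> is the sign
  of \<open>k\<close> as a permutation of the representative word of \<open>B\<close> inside the segments between
  non-boundary positions, and \<open>0\<close> if \<open>k\<close> is no such permutation.  Each \<open>\<Phi>\<^sub>B\<close> transforms under
  \<open>pibar\<^sub>i\<close> by the character of \<open>F\<^bsub>\<lambda>\<^sup>+\<^esub>\<close>, so it vanishes on the relations \<open>W\<close>; conversely,
  straightening with these relations gives \<open>v\<^sub>k \<equiv> \<Sum>\<^sub>B \<Phi>\<^sub>B(k) v\<^bsub>rep B\<^esub>\<close> modulo \<open>W\<close>, so the kernel is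
  exactly \<open>W\<close>.  For the action, \<open>e\<^sub>A\<close> is the unique \<open>H\<^sub>r(0)\<close>-equivariant map sending the sorted
  word of weight \<open>co(A)\<close> to \<open>y\<^sub>A\<close>, the sum of the words with matrix \<open>A\<close>; hence the
  \<open>[e\<^sub>B]\<close>-coefficient of \<open>g e\<^sub>A\<close> is \<open>(g y\<^sub>A)(rep B)\<close>.  Since \<open>g y\<^sub>A\<close> meets the support of \<open>\<Phi>\<^sub>B\<close>
  only in \<open>rep B\<close>, this is \<open>\<Phi>\<^sub>B(g y\<^sub>A)\<close>, which equals \<open>\<Phi>\<^sub>B(g v\<^bsub>rep A\<^esub>)\<close> as \<open>y\<^sub>A \<equiv> v\<^bsub>rep A\<^esub>\<close> modulo \<open>W\<close>.\<close>

section \<open>Adjacent transpositions and inversions\<close>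

text \<open>\<open>adj_swap i\<close> swaps the tensor factors \<open>i\<close> and \<open>i + 1\<close>, i.e. the list positions
  \<open>i - 1\<close> and \<open>i\<close>, as in \<open>Pi\<close>.\<close>

definition adj_swap :: "nat \<Rightarrow> nat list \<Rightarrow> nat list" where
  "adj_swap i k = k[i - 1 := k ! i, i := k ! (i - 1)]"

lemma length_adj_swap[simp]: "length (adj_swap i k) = length k" by (simp add: adj_swap_def)

lemma nth_adj_swap: "1 \<le> i \<Longrightarrow> i < length k \<Longrightarrow> p < length k \<Longrightarrow>
  adj_swap i k ! p = (if p = i - 1 then k ! i else if p = i then k ! (i - 1) else k ! p)"
  by (auto simp: adj_swap_def nth_list_update)

lemma nth_adj_swap_left[simp]: "1 \<le> i \<Longrightarrow> i < length k \<Longrightarrow> adj_swap i k ! (i - Suc 0) = k ! i"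
  by (simp add: nth_adj_swap)
lemma nth_adj_swap_right[simp]: "1 \<le> i \<Longrightarrow> i < length k \<Longrightarrow> adj_swap i k ! i = k ! (i - Suc 0)"
  by (simp add: nth_adj_swap)

lemma adj_swap_adj_swap[simp]: "1 \<le> i \<Longrightarrow> i < length k \<Longrightarrow> adj_swap i (adj_swap i k) = k"
  by (rule nth_equalityI) (auto simp: nth_adj_swap)

lemma adj_swap_same: "k ! (i - 1) = k ! i \<Longrightarrow> adj_swap i k = k"
  unfolding adj_swap_def by (metis list_update_id)

lemma mset_adj_swap[simp]: "1 \<le> i \<Longrightarrow> i < length k \<Longrightarrow> mset (adj_swap i k) = mset k"
  unfolding adj_swap_def using mset_swap[of i k "i - 1"] by simp

lemma set_adj_swap[simp]: "1 \<le> i \<Longrightarrow> i < length k \<Longrightarrow> set (adj_swap i k) = set k"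
  by (metis mset_adj_swap set_mset_mset)

lemma adj_swap_words: "1 \<le> i \<Longrightarrow> i < r \<Longrightarrow> adj_swap i k \<in> words n r \<longleftrightarrow> k \<in> words n r"
  by (cases "length k = r") (auto simp: words_def)

lemma adj_swap_Cons: "2 \<le> i \<Longrightarrow> adj_swap i (a # w) = a # adj_swap (i - 1) w"
  by (cases i; cases "i - 1") (auto simp: adj_swap_def)

lemma adj_swap_1_Cons[simp]: "adj_swap (Suc 0) (a # b # w) = b # a # w"
  by (simp add: adj_swap_def)

lemma adj_swap_neq: "1 \<le> i \<Longrightarrow> i < length k \<Longrightarrow> k ! i \<noteq> k ! (i - 1) \<Longrightarrow> adj_swap i k \<noteq> k"
proof
  assume a: "1 \<le> i" "i < length k" "k ! i \<noteq> k ! (i - 1)" "adj_swap i k = k"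
  have "adj_swap i k ! i = k ! (i - 1)" using a(1,2) by simp
  then show False using a by simp
qed

fun inversions :: "nat list \<Rightarrow> nat" where
  "inversions [] = 0"
| "inversions (a # w) = length (filter (\<lambda>b. b < a) w) + inversions w"

lemma length_filter_mset_eq: "mset xs = mset ys \<Longrightarrow> length (filter P xs) = length (filter P ys)"
  by (metis mset_filter size_mset)

lemma inversions_adj_swap_desc: "1 \<le> i \<Longrightarrow> i < length k \<Longrightarrow> k ! i < k ! (i - 1) \<Longrightarrow> inversions (adj_swap i k) + 1 = inversions k"
proof (induction k arbitrary: i)
  case Nil
  then show ?case by simp
next
  case (Cons a w)
  show ?case
  proof (cases "i = 1")
    case True
    then obtain b w' where w: "w = b # w'" using Cons by (cases w) auto
    show ?thesis using Cons.prems True by (simp add: w adj_swap_1_Cons)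
  next
    case False
    then have i2: "2 \<le> i" using Cons by simp
    have "inversions (adj_swap (i - 1) w) + 1 = inversions w"
      using Cons.IH[of "i - 1"] Cons.prems i2 by (cases i) auto
    moreover have "mset (adj_swap (i - 1) w) = mset w" using Cons.prems i2 by simp
    then have "length (filter (\<lambda>b. b < a) (adj_swap (i - 1) w)) = length (filter (\<lambda>b. b < a) w)"
      by (rule length_filter_mset_eq)
    ultimately show ?thesis using i2
      by (simp add: adj_swap_Cons)
  qed
qed

lemma inversions_adj_swap_asc: "1 \<le> i \<Longrightarrow> i < length k \<Longrightarrow> k ! (i - 1) < k ! i \<Longrightarrow> inversions (adj_swap i k) = inversions k + 1"
proof -
  assume a: "1 \<le> i" "i < length k" "k ! (i - 1) < k ! i"
  then have "adj_swap i k ! i < adj_swap i k ! (i - 1)" by simp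
  with inversions_adj_swap_desc[of i "adj_swap i k"] a show ?thesis by simp
qed

lemma inversions_sorted: "sorted k \<Longrightarrow> inversions k = 0"
  by (induction k) (auto simp: filter_empty_conv)

lemma not_sorted_descent: "\<not> sorted k \<Longrightarrow> \<exists>i. 1 \<le> i \<and> i < length k \<and> k ! i < k ! (i - 1)"
proof -
  assume "\<not> sorted k"
  then obtain i where "Suc i < length k" "k ! Suc i < k ! i" unfolding sorted_iff_nth_Suc by auto
  then show ?thesis by (intro exI[of _ "Suc i"]) auto
qed

lemma sorted_adjacent_le: "sorted k \<Longrightarrow> 1 \<le> i \<Longrightarrow> i < length k \<Longrightarrow> k ! (i - 1) \<le> k ! i"
  by (cases i) (auto simp: sorted_iff_nth_Suc)

lemma sorted_mset_unique: "sorted k \<Longrightarrow> sorted s \<Longrightarrow> mset k = mset s \<Longrightarrow> k = s"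
  by (metis properties_for_sort)

lemma nth_in_set_take: "q < c \<Longrightarrow> q < length l \<Longrightarrow> l ! q \<in> set (take c l)"
proof -
  assume a: "q < c" "q < length l"
  then have "take c l ! q = l ! q" by simp
  moreover have "q < length (take c l)" using a by simp
  ultimately show ?thesis by (metis nth_mem)
qed

lemma nth_in_set_drop: "c \<le> q \<Longrightarrow> q < length l \<Longrightarrow> l ! q \<in> set (drop c l)"
proof -
  assume a: "c \<le> q" "q < length l"
  then have "drop c l ! (q - c) = l ! q" by simp
  moreover have "q - c < length (drop c l)" using a by simp
  ultimately show ?thesis by (metis nth_mem)
qed

lemma mset_take_adj_swap: "c \<noteq> i \<Longrightarrow> 1 \<le> i \<Longrightarrow> i < length k \<Longrightarrow> mset (take c (adj_swap i k)) = mset (take c k)"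
proof (cases "c < i")
  case True
  assume "1 \<le> i" "i < length k"
  with True show ?thesis by (simp add: adj_swap_def)
next
  case False
  assume a: "c \<noteq> i" "1 \<le> i" "i < length k"
  with False have ci: "i < c" by simp
  have "take c (adj_swap i k) = adj_swap i (take c k)"
    unfolding adj_swap_def using ci a by (simp add: take_update_swap)
  moreover have "mset (adj_swap i (take c k)) = mset (take c k)" using ci a by (intro mset_adj_swap) auto
  ultimately show ?thesis by simp
qed

lemma adj_swap_braid: "1 \<le> i \<Longrightarrow> Suc i < length k \<Longrightarrow>
   adj_swap (Suc i) (adj_swap i (adj_swap (Suc i) k)) = adj_swap i (adj_swap (Suc i) (adj_swap i k))"
  by (rule nth_equalityI) (auto simp: nth_adj_swap)

lemma nth_adj_swap_far: "1 \<le> i \<Longrightarrow> i < length k \<Longrightarrow> 1 \<le> j \<Longrightarrow> j < length k \<Longrightarrow> Suc i < j \<or> Suc j < i \<Longrightarrow>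
   adj_swap i k ! j = k ! j \<and> adj_swap i k ! (j - 1) = k ! (j - 1)"
  by (auto simp: nth_adj_swap)

lemma mset_take_eq_sort:
  assumes w: "\<And>q q'. q < c \<Longrightarrow> c \<le> q' \<Longrightarrow> q' < length l \<Longrightarrow> l ! q \<le> l ! q'"
  shows "mset (take c l) = mset (take c (sort l))"
proof (cases "c \<le> length l")
  case False
  then show ?thesis by simp
next
  case True
  have sep: "\<forall>x\<in>set (take c l). \<forall>y\<in>set (drop c l). x \<le> y"
  proof (intro ballI)
    fix x y assume x: "x \<in> set (take c l)" and y: "y \<in> set (drop c l)"
    obtain q where q: "q < length (take c l)" "x = take c l ! q" using x by (auto simp: in_set_conv_nth)
    obtain q' where q': "q' < length (drop c l)" "y = drop c l ! q'" using y by (auto simp: in_set_conv_nth)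
    have "l ! q \<le> l ! (c + q')" using w[of q "c + q'"] q q' True by simp
    then show "x \<le> y" using q q' True by simp
  qed
  have "sort l = sort (take c l) @ sort (drop c l)"
  proof (rule properties_for_sort)
    show "mset (sort (take c l) @ sort (drop c l)) = mset l"
      by (metis append_take_drop_id mset_append mset_sort)
    show "sorted (sort (take c l) @ sort (drop c l))" using sep by (simp add: sorted_append)
  qed
  then have "take c (sort l) = sort (take c l)" using True by simp
  then show ?thesis by simp
qed

section \<open>The right action of \<open>H\<^sub>r(0)\<close> on vectors\<close>

text \<open>\<open>pi_act i z\<close> is \<open>z \<cdot> pibar\<^sub>i\<close> in coordinates: \<open>v\<^sub>k pibar\<^sub>i\<close> is \<open>v\<^sub>l\<close> with \<open>l = adj_swap i k\<close>
  if \<open>k\<close> has an ascent at \<open>i\<close>, and \<open>-v\<^sub>k\<close> if it has a descent there; so only words \<open>l\<close>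
  with a descent at \<open>i\<close> receive contributions.\<close>

definition pi_act :: "nat \<Rightarrow> vec \<Rightarrow> vec" where
  "pi_act i z = (\<lambda>l. if 1 \<le> i \<and> i < length l \<and> l ! i < l ! (i - 1) then z (adj_swap i l) - z l else 0)"

definition supported :: "nat \<Rightarrow> nat \<Rightarrow> vec \<Rightarrow> bool" where
  "supported n r z \<longleftrightarrow> (\<forall>m. m \<notin> words n r \<longrightarrow> z m = 0)"

lemma finite_words[simp]: "finite (words n r)"
proof -
  have "words n r \<subseteq> {xs. set xs \<subseteq> {1..n} \<and> length xs = r}" by (auto simp: words_def)
  moreover have "finite {xs. set xs \<subseteq> {1..n} \<and> length xs = r}" by (rule finite_lists_length_eq) simp
  ultimately show ?thesis by (rule finite_subset)
qed

lemma length_words: "k \<in> words n r \<Longrightarrow> length k = r" by (simp add: words_def)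

lemma Pi_eq:
  assumes "1 \<le> i" "i < length m"
  shows "Pi i l m = (if i < length l \<and> l ! i < l ! (i - 1) \<and> m = adj_swap i l then 1 else 0)
                   + (if l ! i < l ! (i - 1) \<and> m = l then -1 else 0)"
proof -
  consider "m ! (i - 1) < m ! i" | "m ! (i - 1) = m ! i" | "m ! i < m ! (i - 1)" by linarith
  then show ?thesis
  proof cases
    case 1
    have "l = adj_swap i m \<longleftrightarrow> (i < length l \<and> l ! i < l ! (i - 1) \<and> m = adj_swap i l)"
    proof
      assume "l = adj_swap i m"
      then show "i < length l \<and> l ! i < l ! (i - 1) \<and> m = adj_swap i l" using assms 1 by simp
    next
      assume "i < length l \<and> l ! i < l ! (i - 1) \<and> m = adj_swap i l"
      then show "l = adj_swap i m" using assms by simp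
    qed
    moreover have "\<not> (l ! i < l ! (i - 1) \<and> m = l)" using 1 by auto
    ultimately show ?thesis using 1 by (simp add: Pi_def Let_def adj_swap_def)
  next
    case 2
    have "\<not> (i < length l \<and> l ! i < l ! (i - 1) \<and> m = adj_swap i l)" using 2 assms by auto
    moreover have "\<not> (l ! i < l ! (i - 1) \<and> m = l)" using 2 by auto
    ultimately show ?thesis using 2 by (simp add: Pi_def Let_def)
  next
    case 3
    have "\<not> (i < length l \<and> l ! i < l ! (i - 1) \<and> m = adj_swap i l)" using 3 assms by auto
    then show ?thesis using 3 by (auto simp: Pi_def Let_def)
  qed
qed

lemma Pi_mult_sum:
  assumes z: "supported n r z" and i: "1 \<le> i" "i < r"
  shows "(\<Sum>m\<in>words n r. Pi i l m * z m) = pi_act i z l"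
proof -
  have "(\<Sum>m\<in>words n r. Pi i l m * z m) =
     (\<Sum>m\<in>words n r. (if i < length l \<and> l ! i < l ! (i - 1) \<and> m = adj_swap i l then z m else 0)
                   + (if l ! i < l ! (i - 1) \<and> m = l then - z m else 0))"
    by (rule sum.cong) (auto simp: Pi_eq[OF i(1)] length_words i)
  also have "\<dots> = (\<Sum>m\<in>words n r. (if i < length l \<and> l ! i < l ! (i - 1) \<and> m = adj_swap i l then z m else 0))
                   + (\<Sum>m\<in>words n r. (if l ! i < l ! (i - 1) \<and> m = l then - z m else 0))"
    by (rule sum.distrib)
  also have "\<dots> = (if i < length l \<and> l ! i < l ! (i - 1) \<and> adj_swap i l \<in> words n r then z (adj_swap i l) else 0)
         + (if l ! i < l ! (i - 1) \<and> l \<in> words n r then - z l else 0)"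
  proof -
    have a: "(\<Sum>m\<in>words n r. (if i < length l \<and> l ! i < l ! (i - 1) \<and> m = adj_swap i l then z m else 0))
       = (if i < length l \<and> l ! i < l ! (i - 1) \<and> adj_swap i l \<in> words n r then z (adj_swap i l) else 0)"
      by (cases "i < length l \<and> l ! i < l ! (i - 1)") (auto simp: sum.delta intro!: sum.neutral)
    have b: "(\<Sum>m\<in>words n r. (if l ! i < l ! (i - 1) \<and> m = l then - z m else 0))
       = (if l ! i < l ! (i - 1) \<and> l \<in> words n r then - z l else 0)"
      by (cases "l ! i < l ! (i - 1)") (auto simp: sum.delta intro!: sum.neutral)
    show ?thesis using a b by simp
  qed
  also have "\<dots> = pi_act i z l"
    using z i unfolding supported_def pi_act_def
    by (auto simp: adj_swap_words length_words)
  finally show ?thesis .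
qed

lemma sum_mult_Pi:
  assumes "k \<in> words n r" "1 \<le> i" "i < r"
  shows "(\<Sum>m\<in>words n r. M m * Pi i m k) =
     (if k ! (i - 1) < k ! i then M (adj_swap i k) else if k ! (i - 1) = k ! i then 0 else - M k)"
proof -
  have lk: "length k = r" using assms by (simp add: length_words)
  have sk: "adj_swap i k \<in> words n r" using assms adj_swap_words by blast
  consider "k ! (i - 1) < k ! i" | "k ! (i - 1) = k ! i" | "k ! i < k ! (i - 1)" by linarith
  then show ?thesis
  proof cases
    case 1
    then have "(\<Sum>m\<in>words n r. M m * Pi i m k) = (\<Sum>m\<in>words n r. if m = adj_swap i k then M m else 0)"
      by (intro sum.cong) (auto simp: Pi_def Let_def adj_swap_def)
    then show ?thesis using 1 sk by simp
  next
    case 2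
    then show ?thesis by (simp add: Pi_def Let_def)
  next
    case 3
    then have "(\<Sum>m\<in>words n r. M m * Pi i m k) = (\<Sum>m\<in>words n r. if m = k then - M m else 0)"
      by (intro sum.cong) (auto simp: Pi_def Let_def)
    then show ?thesis using 3 assms by simp
  qed
qed

lemma pi_act_zero[simp]: "pi_act i (\<lambda>_. 0) = (\<lambda>_. 0)" by (rule ext) (simp add: pi_act_def)

lemma pi_act_add: "pi_act i (\<lambda>l. f l + g l) = (\<lambda>l. pi_act i f l + pi_act i g l)"
  by (auto simp: pi_act_def)

lemma pi_act_scale: "pi_act i (\<lambda>l. c * f l) = (\<lambda>l. c * pi_act i f l)"
  by (auto simp: pi_act_def algebra_simps)

lemma pi_act_sum: "pi_act i (\<lambda>l. \<Sum>x\<in>A. f x l) = (\<lambda>l. \<Sum>x\<in>A. pi_act i (f x) l)"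
  by (rule ext) (auto simp: pi_act_def sum_subtractf)

lemma pi_act_quadratic: "pi_act j (pi_act j z) = (\<lambda>l. - pi_act j z l)"
proof
  fix l
  show "pi_act j (pi_act j z) l = - pi_act j z l"
  proof (cases "1 \<le> j \<and> j < length l \<and> l ! j < l ! (j - 1)")
    case True
    have g: "\<not> (adj_swap j l ! j < adj_swap j l ! (j - 1))" using True by simp
    then have "pi_act j z (adj_swap j l) = 0" unfolding pi_act_def by simp
    then show ?thesis using True unfolding pi_act_def[of j "pi_act j z"] by simp
  next
    case False
    then show ?thesis by (auto simp: pi_act_def)
  qed
qed

lemma adj_swap_commute: "1 \<le> i \<Longrightarrow> Suc i < j \<Longrightarrow> j < length l \<Longrightarrow> adj_swap i (adj_swap j l) = adj_swap j (adj_swap i l)"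
proof -
  assume a: "1 \<le> i" "Suc i < j" "j < length l"
  have "adj_swap j l ! i = l ! i" "adj_swap j l ! (i - 1) = l ! (i - 1)" "adj_swap i l ! j = l ! j" "adj_swap i l ! (j - 1) = l ! (j - 1)"
    using a by (auto simp: nth_adj_swap)
  then show ?thesis unfolding adj_swap_def[of i] adj_swap_def[of j]
    using a by (simp add: adj_swap_def list_update_swap)
qed

lemma pi_act_commute: assumes "Suc i < j" shows "pi_act i (pi_act j z) = pi_act j (pi_act i z)"
proof
  fix l
  show "pi_act i (pi_act j z) l = pi_act j (pi_act i z) l"
  proof (cases "1 \<le> i \<and> j < length l")
    case True
    have e1: "adj_swap i l ! j = l ! j" "adj_swap i l ! (j - 1) = l ! (j - 1)"
      using True assms by (auto simp: nth_adj_swap)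
    have e2: "adj_swap j l ! i = l ! i" "adj_swap j l ! (i - 1) = l ! (i - 1)"
      using True assms by (auto simp: nth_adj_swap)
    have c: "adj_swap i (adj_swap j l) = adj_swap j (adj_swap i l)" using True assms by (intro adj_swap_commute) auto
    show ?thesis using True assms e1 e2 c unfolding pi_act_def by auto
  next
    case False
    then show ?thesis using assms unfolding pi_act_def by auto
  qed
qed

lemma pi_act_at: "length p = i - 1 \<Longrightarrow> 1 \<le> i \<Longrightarrow>
   pi_act i z (p @ a # b # q) = (if b < a then z (p @ b # a # q) - z (p @ a # b # q) else 0)"
proof -
  assume a: "length p = i - 1" "1 \<le> i"
  have "adj_swap i (p @ a # b # q) = p @ b # a # q"
    using a by (cases i) (auto simp: adj_swap_def list_update_append nth_append)
  then show ?thesis using a by (auto simp: pi_act_def nth_append)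
qed

lemma pi_act_at_Suc: "length p = i - 1 \<Longrightarrow> 1 \<le> i \<Longrightarrow>
   pi_act (Suc i) z (p @ a # b # c # q) = (if c < b then z (p @ a # c # b # q) - z (p @ a # b # c # q) else 0)"
  using pi_act_at[of "p @ [a]" "Suc i" z b c q] by simp

lemma pi_act_braid: "pi_act i (pi_act (Suc i) (pi_act i z)) = pi_act (Suc i) (pi_act i (pi_act (Suc i) z))"
proof
  fix l
  show "pi_act i (pi_act (Suc i) (pi_act i z)) l = pi_act (Suc i) (pi_act i (pi_act (Suc i) z)) l"
  proof (cases "1 \<le> i \<and> Suc i < length l")
    case True
    define p where "p = take (i - 1) l"
    define q where "q = drop (i + 2) l"
    have d1: "drop (Suc i) l = l ! Suc i # drop (i + 2) l" using True
      by (metis Cons_nth_drop_Suc add_2_eq_Suc')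
    have d2: "drop i l = l ! i # drop (Suc i) l" using True
      by (simp add: Cons_nth_drop_Suc)
    have d3: "drop (i - 1) l = l ! (i - 1) # drop i l"
    proof -
      have "i - 1 < length l" using True by arith
      from Cons_nth_drop_Suc[OF this] have "l ! (i - 1) # drop (Suc (i - 1)) l = drop (i - 1) l" .
      moreover have "Suc (i - 1) = i" using True by simp
      ultimately show ?thesis by simp
    qed
    have l: "l = p @ l ! (i - 1) # l ! i # l ! (Suc i) # q"
      unfolding p_def q_def using d1 d2 d3 by (metis append_take_drop_id)
    have lp: "length p = i - 1" using True unfolding p_def by (auto simp: min_def)
    obtain a b c where abc: "l = p @ a # b # c # q" using l by blast
    show ?thesis
      unfolding abc using True lp
      by (auto simp: pi_act_at pi_act_at_Suc algebra_simps)
  next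
    case False
    then show ?thesis unfolding pi_act_def by auto
  qed
qed

lemma supported_pi_act: "supported n r z \<Longrightarrow> supported n r (pi_act i z)"
  unfolding supported_def
proof (intro allI impI)
  fix m assume z: "\<forall>m. m \<notin> words n r \<longrightarrow> z m = 0" and m: "m \<notin> words n r"
  show "pi_act i z m = 0"
  proof (cases "1 \<le> i \<and> i < length m \<and> m ! i < m ! (i - 1)")
    case True
    have "adj_swap i m \<notin> words n r"
    proof
      assume "adj_swap i m \<in> words n r"
      then have "length m = r" by (metis length_adj_swap length_words)
      with \<open>adj_swap i m \<in> words n r\<close> True have "m \<in> words n r" using adj_swap_words by blast
      with m show False by simp
    qed
    then show ?thesis using True z m by (simp add: pi_act_def)
  next
    case False
    then show ?thesis by (auto simp: pi_act_def)
  qed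
qed

section \<open>The action of \<open>U\<^sub>0(gl\<^sub>n)\<close> commutes with that of \<open>H\<^sub>r(0)\<close>\<close>

lemma tens_Nil[simp]: "tens a y [] = 0" by (simp add: tens_def)
lemma tens_Cons[simp]: "tens a y (b # l) = (if b = a then y l else 0)" by (simp add: tens_def)
lemma tens_zero[simp]: "tens a (\<lambda>_. 0) = (\<lambda>_. 0)" by (rule ext) (simp add: tens_def split: list.split)
lemma tens_uminus: "tens a (\<lambda>l. - y l) = (\<lambda>l. - tens a y l)" by (rule ext) (simp add: tens_def split: list.split)

definition gen_act :: "gen \<Rightarrow> nat list \<Rightarrow> vec" where
  "gen_act g k = (case g of E i \<Rightarrow> eact i k | F i \<Rightarrow> fact_act i k | K i \<Rightarrow> kact i k)"

lemma rho_gen_act: "rho g l k = gen_act g k l" by (simp add: rho_def gen_act_def split: gen.split)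

lemma kact_nonzero: "kact i k l \<noteq> 0 \<Longrightarrow> l = k"
proof (induction k arbitrary: l)
  case Nil then show ?case by (simp add: single_def split: if_splits)
next
  case (Cons a w)
  then show ?case by (cases l) (auto split: if_splits)
qed

lemma single_nonzero: "single k l \<noteq> 0 \<Longrightarrow> l = k" by (simp add: single_def split: if_splits)

lemma eact_nonzero: "eact i k l \<noteq> 0 \<Longrightarrow> \<exists>p<length k. k ! p = Suc i \<and> l = k[p := i]"
proof (induction k arbitrary: l)
  case Nil then show ?case by simp
next
  case (Cons a w)
  show ?case
  proof (cases l)
    case Nil then show ?thesis using Cons by (auto split: if_splits)
  next
    case (Cons b l')
    note lc = this
    show ?thesis
    proof (cases "b = a \<and> eact i w l' \<noteq> 0")
      case True
      then obtain p where "p < length w" "w ! p = Suc i" "l' = w[p := i]" using Cons.IH by blast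
      then show ?thesis using True lc by (intro exI[of _ "Suc p"]) auto
    next
      case False
      then have "a = Suc i \<and> b = i \<and> kact i w l' \<noteq> 0" using Cons.prems lc by (auto split: if_splits)
      then show ?thesis using lc kact_nonzero by (intro exI[of _ 0]) auto
    qed
  qed
qed

lemma fact_act_nonzero: "fact_act i k l \<noteq> 0 \<Longrightarrow> \<exists>p<length k. k ! p = i \<and> l = k[p := Suc i]"
proof (induction k arbitrary: l)
  case Nil then show ?case by simp
next
  case (Cons a w)
  show ?case
  proof (cases l)
    case Nil then show ?thesis using Cons by (auto split: if_splits)
  next
    case (Cons b l')
    note lc = this
    show ?thesis
    proof (cases "a \<noteq> Suc i \<and> b = a \<and> fact_act i w l' \<noteq> 0")
      case True
      then obtain p where "p < length w" "w ! p = i" "l' = w[p := Suc i]" using Cons.IH by blast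
      then show ?thesis using True lc by (intro exI[of _ "Suc p"]) auto
    next
      case False
      then have "a = i \<and> b = Suc i \<and> single w l' \<noteq> 0" using Cons.prems lc by (auto split: if_splits)
      then show ?thesis using lc single_nonzero by (intro exI[of _ 0]) auto
    qed
  qed
qed

lemma supported_gen_act:
  assumes "k \<in> words n r" "g \<in> gens n"
  shows "supported n r (gen_act g k)"
  unfolding supported_def
proof (intro allI impI)
  fix l assume l: "l \<notin> words n r"
  show "gen_act g k l = 0"
  proof (rule ccontr)
    assume nz: "gen_act g k l \<noteq> 0"
    have kw: "length k = r" "set k \<subseteq> {1..n}" using assms by (auto simp: words_def)
    from assms(2) consider (e) i where "g = E i" "1 \<le> i" "i < n" | (f) i where "g = F i" "1 \<le> i" "i < n"
      | (k) i where "g = K i" "1 \<le> i" "i \<le> n" by (auto simp: gens_def)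
    then show False
    proof cases
      case e
      from nz e have "eact i k l \<noteq> 0" by (simp add: gen_act_def)
      then obtain p where p: "p < length k" "l = k[p := i]" using eact_nonzero by blast
      have "set l \<subseteq> {1..n}" using p kw e set_update_subset_insert[of k p i] by auto
      then show False using l p kw by (simp add: words_def)
    next
      case f
      from nz f have "fact_act i k l \<noteq> 0" by (simp add: gen_act_def)
      then obtain p where p: "p < length k" "l = k[p := Suc i]" using fact_act_nonzero by blast
      have "set l \<subseteq> {1..n}" using p kw f set_update_subset_insert[of k p "Suc i"] by auto
      then show False using l p kw by (simp add: words_def)
    next
      case k
      then have "l = k" using nz kact_nonzero by (auto simp: gen_act_def)
      then show False using l assms by simp
    qed
  qed
qed

lemma pi_act_tens: "2 \<le> j \<Longrightarrow> pi_act j (tens a y) = tens a (pi_act (j - 1) y)"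
proof
  fix l assume j: "2 \<le> j"
  then obtain m where m: "j = Suc (Suc m)" by (metis add_2_eq_Suc le_Suc_ex)
  show "pi_act j (tens a y) l = tens a (pi_act (j - 1) y) l"
  proof (cases l)
    case Nil then show ?thesis by (simp add: pi_act_def)
  next
    case (Cons b l')
    then show ?thesis using j m by (auto simp: pi_act_def adj_swap_Cons)
  qed
qed

lemma pi_act_1: "pi_act (Suc 0) G l = (case l of c # d # u \<Rightarrow> if d < c then G (d # c # u) - G (c # d # u) else 0 | _ \<Rightarrow> 0)"
  by (cases l rule: remdups_adj.cases) (auto simp: pi_act_def)

text \<open>For the linear map with columns \<open>f\<close>, \<open>pi_image f k j\<close> is the image of \<open>v\<^sub>k \<cdot> pibar\<^sub>j\<close>;
  the map commutes with \<open>pibar\<^sub>j\<close> iff \<open>pi_act j (f k) = pi_image f k j\<close> for all \<open>k\<close>.\<close>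

definition pi_image :: "(nat list \<Rightarrow> vec) \<Rightarrow> nat list \<Rightarrow> nat \<Rightarrow> vec" where
  "pi_image f k j = (if k ! (j - 1) < k ! j then f (adj_swap j k) else if k ! (j - 1) = k ! j then (\<lambda>_. 0)
     else (\<lambda>l. - f k l))"

lemma pi_image_Cons: "2 \<le> j \<Longrightarrow> j < Suc (length w) \<Longrightarrow>
  pi_image f (a # w) j = (if w ! (j - 2) < w ! (j - 1) then f (a # adj_swap (j - 1) w) else if w ! (j - 2) = w ! (j - 1) then (\<lambda>_. 0)
     else (\<lambda>l. - f (a # w) l))"
  by (cases j; cases "j - 1") (auto simp: pi_image_def adj_swap_Cons)

lemma pi_act_single_image:
  assumes j: "1 \<le> j" "j < length k"
  shows "pi_act j (single k) = pi_image single k j"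
proof
  fix l
  have swap_eq: "adj_swap j l = k \<longleftrightarrow> length l = length k \<and> l = adj_swap j k"
    using j by (metis length_adj_swap adj_swap_adj_swap)
  consider "k ! (j - 1) < k ! j" | "k ! (j - 1) = k ! j" | "k ! j < k ! (j - 1)" by linarith
  then show "pi_act j (single k) l = pi_image single k j l"
    by cases (use j adj_swap_neq[OF j] in \<open>auto simp: pi_act_def pi_image_def single_def swap_eq\<close>)
qed

lemma pi_act_kact: "1 \<le> j \<Longrightarrow> j < length k \<Longrightarrow> pi_act j (kact i k) = pi_image (kact i) k j"
proof (induction k arbitrary: j)
  case Nil then show ?case by simp
next
  case (Cons a w)
  show ?case
  proof (cases "j = 1")
    case True
    then obtain b w' where w: "w = b # w'" using Cons.prems by (cases w) auto
    show ?thesis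
    proof
      fix l
      show "pi_act j (kact i (a # w)) l = pi_image (kact i) (a # w) j l"
        using True unfolding w
        by (cases l rule: remdups_adj.cases) (auto simp: pi_act_1 pi_image_def)
    qed
  next
    case False
    then have j2: "2 \<le> j" using Cons.prems by simp
    have ih: "pi_act (j - 1) (kact i w) = pi_image (kact i) w (j - 1)" using Cons j2 by (intro Cons.IH) auto
    show ?thesis
    proof (cases "a = i")
      case True
      then show ?thesis using j2 Cons.prems by (auto simp: pi_image_def adj_swap_Cons fun_eq_iff)
    next
      case False
      have "pi_act j (kact i (a # w)) = tens a (pi_act (j - 1) (kact i w))"
        using False j2 by (simp add: pi_act_tens)
      also have "\<dots> = pi_image (kact i) (a # w) j"
        unfolding ih using False j2 Cons.prems
        by (cases j; cases "j - 1") (auto simp: pi_image_def adj_swap_Cons tens_uminus)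
      finally show ?thesis .
    qed
  qed
qed

lemma pi_act_eact: "1 \<le> j \<Longrightarrow> j < length k \<Longrightarrow> pi_act j (eact i k) = pi_image (eact i) k j"
proof (induction k arbitrary: j)
  case Nil then show ?case by simp
next
  case (Cons a w)
  show ?case
  proof (cases "j = 1")
    case True
    then obtain b w' where w: "w = b # w'" using Cons.prems by (cases w) auto
    show ?thesis
    proof
      fix l
      show "pi_act j (eact i (a # w)) l = pi_image (eact i) (a # w) j l"
        using True unfolding w
        by (cases l rule: remdups_adj.cases) (auto simp: pi_act_1 pi_image_def)
    qed
  next
    case False
    then have j2: "2 \<le> j" using Cons.prems by simp
    have ih: "pi_act (j - 1) (eact i w) = pi_image (eact i) w (j - 1)" using Cons j2 by (intro Cons.IH) auto
    have ihk: "pi_act (j - 1) (kact i w) = pi_image (kact i) w (j - 1)" using Cons j2 by (intro pi_act_kact) auto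
    show ?thesis
    proof (cases "a = Suc i")
      case True
      have "pi_act j (eact i (a # w)) = (\<lambda>l. tens a (pi_act (j - 1) (eact i w)) l + tens i (pi_act (j - 1) (kact i w)) l)"
        using True j2 by (simp add: pi_act_add pi_act_tens)
      also have "\<dots> = pi_image (eact i) (a # w) j"
        unfolding ih ihk using True j2 Cons.prems
        by (cases j; cases "j - 1") (auto simp: pi_image_def adj_swap_Cons tens_uminus)
      finally show ?thesis .
    next
      case False
      have "pi_act j (eact i (a # w)) = tens a (pi_act (j - 1) (eact i w))"
        using False j2 by (simp add: pi_act_tens)
      also have "\<dots> = pi_image (eact i) (a # w) j"
        unfolding ih using False j2 Cons.prems
        by (cases j; cases "j - 1") (auto simp: pi_image_def adj_swap_Cons tens_uminus)
      finally show ?thesis .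
    qed
  qed
qed

lemma pi_act_fact_act: "1 \<le> j \<Longrightarrow> j < length k \<Longrightarrow> pi_act j (fact_act i k) = pi_image (fact_act i) k j"
proof (induction k arbitrary: j)
  case Nil then show ?case by simp
next
  case (Cons a w)
  show ?case
  proof (cases "j = 1")
    case True
    then obtain b w' where w: "w = b # w'" using Cons.prems by (cases w) auto
    show ?thesis
    proof
      fix l
      show "pi_act j (fact_act i (a # w)) l = pi_image (fact_act i) (a # w) j l"
        using True unfolding w
        by (cases l rule: remdups_adj.cases) (auto simp: pi_act_1 pi_image_def single_def)
    qed
  next
    case False
    then have j2: "2 \<le> j" using Cons.prems by simp
    have ih: "pi_act (j - 1) (fact_act i w) = pi_image (fact_act i) w (j - 1)" using Cons j2 by (intro Cons.IH) auto
    have ihs: "pi_act (j - 1) (single w) = pi_image single w (j - 1)" using Cons j2 by (intro pi_act_single_image) auto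
    consider "a = Suc i" | "a = i" | "a \<noteq> i \<and> a \<noteq> Suc i" by blast
    then show ?thesis
    proof cases
      case 1
      have "fact_act i (a # w) = (\<lambda>_. 0)" using 1 by (rule_tac ext) simp
      moreover have "fact_act i (a # adj_swap (j - 1) w) = (\<lambda>_. 0)" using 1 by (rule_tac ext) simp
      ultimately show ?thesis using j2 Cons.prems by (simp add: pi_image_Cons)
    next
      case 2
      have "pi_act j (fact_act i (a # w)) = (\<lambda>l. tens a (pi_act (j - 1) (fact_act i w)) l + tens (Suc i) (pi_act (j - 1) (single w)) l)"
        using 2 j2 by (simp add: pi_act_add pi_act_tens)
      also have "\<dots> = pi_image (fact_act i) (a # w) j"
        unfolding ih ihs using 2 j2 Cons.prems
        by (cases j; cases "j - 1") (auto simp: pi_image_def adj_swap_Cons tens_uminus)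
      finally show ?thesis .
    next
      case 3
      have "pi_act j (fact_act i (a # w)) = tens a (pi_act (j - 1) (fact_act i w))"
        using 3 j2 by (simp add: pi_act_tens)
      also have "\<dots> = pi_image (fact_act i) (a # w) j"
        unfolding ih using 3 j2 Cons.prems
        by (cases j; cases "j - 1") (auto simp: pi_image_def adj_swap_Cons tens_uminus)
      finally show ?thesis .
    qed
  qed
qed

lemma pi_act_gen_act: "1 \<le> j \<Longrightarrow> j < length k \<Longrightarrow> pi_act j (gen_act g k) = pi_image (gen_act g) k j"
  by (cases g) (simp_all add: gen_act_def pi_act_eact pi_act_fact_act pi_act_kact pi_image_def)

definition rhov :: "nat \<Rightarrow> nat \<Rightarrow> gen \<Rightarrow> vec \<Rightarrow> vec" where
  "rhov n r g z = (\<lambda>l. \<Sum>k\<in>words n r. rho g l k * z k)"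

lemma supported_rhov: "g \<in> gens n \<Longrightarrow> supported n r (rhov n r g z)"
  unfolding supported_def rhov_def rho_gen_act using supported_gen_act unfolding supported_def
  by (auto intro!: sum.neutral)

lemma rhov_diff_scale: "rhov n r g (\<lambda>l. x l - c * y l) = (\<lambda>l. rhov n r g x l - c * rhov n r g y l)"
  by (simp add: rhov_def fun_eq_iff right_diff_distrib sum_subtractf sum_distrib_left mult.left_commute)

lemma rhov_pi_act:
  assumes g: "g \<in> gens n" and z: "supported n r z" and j: "1 \<le> j" "j < r"
  shows "rhov n r g (pi_act j z) = pi_act j (rhov n r g z)"
proof
  fix l
  have "rhov n r g (pi_act j z) l = (\<Sum>k\<in>words n r. gen_act g k l * (\<Sum>m\<in>words n r. Pi j k m * z m))"
    unfolding rhov_def rho_gen_act using Pi_mult_sum[OF z j] by simp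
  also have "\<dots> = (\<Sum>k\<in>words n r. \<Sum>m\<in>words n r. z m * (gen_act g k l * Pi j k m))"
    by (simp add: sum_distrib_left mult.commute mult.left_commute)
  also have "\<dots> = (\<Sum>m\<in>words n r. z m * (\<Sum>k\<in>words n r. gen_act g k l * Pi j k m))"
    by (subst sum.swap) (simp add: sum_distrib_left)
  also have "\<dots> = (\<Sum>m\<in>words n r. z m * pi_act j (gen_act g m) l)"
  proof (rule sum.cong[OF refl])
    fix m assume m: "m \<in> words n r"
    have lm: "length m = r" using m by (simp add: length_words)
    have "(\<Sum>k\<in>words n r. gen_act g k l * Pi j k m) =
      (if m ! (j - 1) < m ! j then gen_act g (adj_swap j m) l else if m ! (j - 1) = m ! j then 0 else - gen_act g m l)"
      using sum_mult_Pi[of m n r j "\<lambda>k. gen_act g k l"] m j by simp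
    also have "\<dots> = pi_act j (gen_act g m) l" using pi_act_gen_act[of j m g] j lm by (simp add: pi_image_def)
    finally show "z m * (\<Sum>k\<in>words n r. gen_act g k l * Pi j k m) = z m * pi_act j (gen_act g m) l" by simp
  qed
  also have "\<dots> = pi_act j (\<lambda>l. \<Sum>m\<in>words n r. z m * gen_act g m l) l"
    by (simp add: pi_act_sum pi_act_scale)
  also have "\<dots> = pi_act j (rhov n r g z) l"
    unfolding rhov_def rho_gen_act by (simp add: mult.commute)
  finally show "rhov n r g (pi_act j z) l = pi_act j (rhov n r g z) l" .
qed

text \<open>A generator changes a single letter by one, so it cannot reverse a strict inequality between
  two letters.\<close>

lemma gen_act_nonzero_le:
  assumes nz: "gen_act g k l \<noteq> 0" and q: "q < length k" "q' < length k" and less: "k ! q < k ! q'"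
  shows "l ! q \<le> l ! q'"
proof (cases g)
  case (E i)
  then have "eact i k l \<noteq> 0" using nz by (simp add: gen_act_def)
  then obtain p where "p < length k" "k ! p = Suc i" "l = k[p := i]"
    using eact_nonzero by blast
  then show ?thesis using q less by (auto simp: nth_list_update)
next
  case (F i)
  then have "fact_act i k l \<noteq> 0" using nz by (simp add: gen_act_def)
  then obtain p where "p < length k" "k ! p = i" "l = k[p := Suc i]"
    using fact_act_nonzero by blast
  then show ?thesis using q less by (auto simp: nth_list_update)
next
  case (K i)
  then have "l = k" using nz kact_nonzero by (auto simp: gen_act_def)
  then show ?thesis using less by simp
qed

section \<open>Equivariant maps out of a cyclic permutation module\<close>

definition first_descent :: "nat list \<Rightarrow> nat" where
  "first_descent k = (LEAST j. 1 \<le> j \<and> j < length k \<and> k ! j < k ! (j - 1))"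

lemma first_descent_is_descent: "\<not> sorted k \<Longrightarrow> 1 \<le> first_descent k \<and> first_descent k < length k \<and> k ! first_descent k < k ! (first_descent k - 1)"
  unfolding first_descent_def using not_sorted_descent[of k] by (metis (mono_tags, lifting) LeastI_ex)

lemma first_descent_least: "1 \<le> j \<Longrightarrow> j < length k \<Longrightarrow> k ! j < k ! (j - 1) \<Longrightarrow> first_descent k \<le> j"
  unfolding first_descent_def by (rule Least_le) simp

lemma inversions_first_descent: "\<not> sorted k \<Longrightarrow> inversions (adj_swap (first_descent k) k) < inversions k"
  using first_descent_is_descent[of k] inversions_adj_swap_desc[of "first_descent k" k] by simp

text \<open>If \<open>k\<close> has a descent at \<open>i\<close> then \<open>v\<^sub>k = v\<^bsub>adj_swap i k\<^esub> \<cdot> pibar\<^sub>i\<close>, so an equivariant map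
  sending the sorted word \<open>v\<^sub>s\<close> to \<open>y\<close> is forced to send \<open>v\<^sub>k\<close> to \<open>equiv_ext s y k\<close>;
  choosing the first descent makes this a definition.\<close>

function equiv_ext :: "nat list \<Rightarrow> vec \<Rightarrow> nat list \<Rightarrow> vec" where
  "equiv_ext s y k = (if mset k \<noteq> mset s then (\<lambda>_. 0) else if sorted k then y
     else pi_act (first_descent k) (equiv_ext s y (adj_swap (first_descent k) k)))"
  by auto
termination
  by (relation "measure (\<lambda>(s, y, k). inversions k)") (auto simp: inversions_first_descent)

declare equiv_ext.simps[simp del]

lemma equiv_ext_other: "mset k \<noteq> mset s \<Longrightarrow> equiv_ext s y k = (\<lambda>_. 0)"
  by (subst equiv_ext.simps) simp

lemma equiv_ext_sorted: "mset k = mset s \<Longrightarrow> sorted k \<Longrightarrow> equiv_ext s y k = y"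
  by (subst equiv_ext.simps) simp

lemma equiv_ext_step: "mset k = mset s \<Longrightarrow> \<not> sorted k \<Longrightarrow> equiv_ext s y k = pi_act (first_descent k) (equiv_ext s y (adj_swap (first_descent k) k))"
  by (subst equiv_ext.simps) simp

lemma supported_H_endo_column: "is_H_endo n r M \<Longrightarrow> supported n r (\<lambda>l. M l k)"
  unfolding is_H_endo_def supported_def by auto

lemma H_endo_column_ascent:
  assumes M: "is_H_endo n r M" and k: "k \<in> words n r" and j: "1 \<le> j" "j < r" and asc: "k ! (j - 1) < k ! j"
  shows "(\<lambda>l. M l (adj_swap j k)) = pi_act j (\<lambda>l. M l k)"
proof
  fix l
  have sM: "supported n r (\<lambda>l. M l k)" using supported_H_endo_column[OF M] .
  show "M l (adj_swap j k) = pi_act j (\<lambda>l. M l k) l"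
  proof (cases "l \<in> words n r")
    case True
    have "(\<Sum>m\<in>words n r. M l m * Pi j m k) = (\<Sum>m\<in>words n r. Pi j l m * M m k)"
      using M True k j unfolding is_H_endo_def by auto
    moreover have "(\<Sum>m\<in>words n r. M l m * Pi j m k) = M l (adj_swap j k)"
      using sum_mult_Pi[of k n r j "\<lambda>m. M l m"] k j asc by simp
    moreover have "(\<Sum>m\<in>words n r. Pi j l m * M m k) = pi_act j (\<lambda>l. M l k) l"
      using Pi_mult_sum[OF sM j] by simp
    ultimately show ?thesis by simp
  next
    case False
    then show ?thesis using M supported_pi_act[OF sM, of j] unfolding is_H_endo_def supported_def by auto
  qed
qed

text \<open>\<open>y_inv\<close>: where \<open>s\<close> has equal letters at \<open>j\<close>, \<open>v\<^sub>s \<cdot> pibar\<^sub>j = 0\<close>, so \<open>y\<close> must be killed by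
  \<open>pibar\<^sub>j\<close> as well.\<close>

locale cyclic_vector =
  fixes n r :: nat and s :: "nat list" and y :: vec
  assumes s_words: "s \<in> words n r" and s_sorted: "sorted s" and y_supp: "supported n r y"
    and y_inv: "\<And>j. 1 \<le> j \<Longrightarrow> j < r \<Longrightarrow> s ! (j - 1) = s ! j \<Longrightarrow> pi_act j y = (\<lambda>_. 0)"
begin

abbreviation "Ext \<equiv> equiv_ext s y"

lemma length_s: "length s = r" using s_words by (simp add: length_words)

lemma sorted_eq_s: "mset k = mset s \<Longrightarrow> sorted k \<Longrightarrow> k = s"
  using s_sorted sorted_mset_unique by blast

text \<open>The two ways of sorting a descending triple at positions \<open>i - 1, i, i + 1\<close> agree by the braid
  relation.\<close>

lemma equiv_ext_braid:
  assumes IH: "\<And>k' j. inversions k' < inversions k \<Longrightarrow> mset k' = mset s \<Longrightarrow> 1 \<le> j \<Longrightarrow> j < length k' \<Longrightarrow>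
      k' ! j < k' ! (j - 1) \<Longrightarrow> Ext k' = pi_act j (Ext (adj_swap j k'))"
    and k: "mset k = mset s" and i: "1 \<le> i" "Suc i < length k"
    and desc: "k ! i < k ! (i - 1)" "k ! Suc i < k ! i"
  shows "pi_act i (Ext (adj_swap i k)) = pi_act (Suc i) (Ext (adj_swap (Suc i) k))"
proof -
  let ?x = "k ! (i - 1)" and ?y = "k ! i" and ?z = "k ! Suc i"
  define k1 where "k1 = adj_swap i k"
  define k2 where "k2 = adj_swap (Suc i) k1"
  define k3 where "k3 = adj_swap i k2"
  define k1' where "k1' = adj_swap (Suc i) k"
  define k2' where "k2' = adj_swap i k1'"
  define k3' where "k3' = adj_swap (Suc i) k2'"
  have v1: "k1 ! (i - 1) = ?y" "k1 ! i = ?x" "k1 ! Suc i = ?z" "length k1 = length k"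
    unfolding k1_def using i by (auto simp: nth_adj_swap)
  have v2: "k2 ! (i - 1) = ?y" "k2 ! i = ?z" "k2 ! Suc i = ?x" "length k2 = length k"
    unfolding k2_def using i v1 by (auto simp: nth_adj_swap)
  have v1': "k1' ! (i - 1) = ?x" "k1' ! i = ?z" "k1' ! Suc i = ?y" "length k1' = length k"
    unfolding k1'_def using i by (auto simp: nth_adj_swap)
  have v2': "k2' ! (i - 1) = ?z" "k2' ! i = ?x" "k2' ! Suc i = ?y" "length k2' = length k"
    unfolding k2'_def using i v1' by (auto simp: nth_adj_swap)
  have m: "mset k1 = mset s" "mset k2 = mset s" "mset k1' = mset s" "mset k2' = mset s"
    unfolding k2_def k1_def k2'_def k1'_def using i k by auto
  have n1: "inversions k1 < inversions k" "inversions k1' < inversions k"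
    unfolding k1_def k1'_def using inversions_adj_swap_desc[of i k] inversions_adj_swap_desc[of "Suc i" k] i desc
    by simp_all
  have n2: "inversions k2 < inversions k" "inversions k2' < inversions k"
    using n1 inversions_adj_swap_desc[of "Suc i" k1] inversions_adj_swap_desc[of i k1'] i v1 v1' desc
    unfolding k2_def k2'_def by simp_all
  have "Ext k1 = pi_act (Suc i) (pi_act i (Ext k3))"
    using IH[OF n1(1) m(1), of "Suc i"] IH[OF n2(1) m(2), of i] i v1 v2 desc
    unfolding k2_def k3_def by simp
  then have "pi_act i (Ext k1) = pi_act (Suc i) (pi_act i (pi_act (Suc i) (Ext k3)))"
    using pi_act_braid by simp
  also have "k3 = k3'" unfolding k3'_def k3_def k2'_def k2_def k1'_def k1_def
    using adj_swap_braid[of i k] i by simp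
  also have "pi_act (Suc i) (pi_act i (pi_act (Suc i) (Ext k3'))) = pi_act (Suc i) (Ext k1')"
    using IH[OF n1(2) m(3), of i] IH[OF n2(2) m(4), of "Suc i"] i v1' v2' desc
    unfolding k2'_def k3'_def by simp
  finally show ?thesis unfolding k1_def k1'_def .
qed

lemma equiv_ext_descent: "mset k = mset s \<Longrightarrow> 1 \<le> j \<Longrightarrow> j < length k \<Longrightarrow> k ! j < k ! (j - 1) \<Longrightarrow>
  Ext k = pi_act j (Ext (adj_swap j k))"
proof (induction "inversions k" arbitrary: k j rule: less_induct)
  case less
  have ns: "\<not> sorted k" using less.prems sorted_adjacent_le[of k j] by fastforce
  define i where "i = first_descent k"
  have i: "1 \<le> i" "i < length k" "k ! i < k ! (i - 1)" using first_descent_is_descent[OF ns] unfolding i_def by auto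
  have ij: "i \<le> j" unfolding i_def using less.prems by (intro first_descent_least) auto
  have step: "Ext k = pi_act i (Ext (adj_swap i k))" using equiv_ext_step[OF less.prems(1) ns] unfolding i_def .
  have ms: "\<And>t. 1 \<le> t \<Longrightarrow> t < length k \<Longrightarrow> mset (adj_swap t k) = mset s" using less.prems by simp
  consider "i = j" | "Suc i < j" | "j = Suc i" using ij by linarith
  then show ?case
  proof cases
    case 1 then show ?thesis using step by simp
  next
    case 2
    let ?ki = "adj_swap i k" and ?kj = "adj_swap j k"
    have a1: "?ki ! j < ?ki ! (j - 1)" using 2 i less.prems by (auto simp: nth_adj_swap)
    have a2: "?kj ! i < ?kj ! (i - 1)" using 2 i less.prems by (auto simp: nth_adj_swap)
    have n1: "inversions ?ki < inversions k" using inversions_adj_swap_desc[of i k] i by simp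
    have n2: "inversions ?kj < inversions k" using inversions_adj_swap_desc[of j k] less.prems by simp
    have h1: "Ext ?ki = pi_act j (Ext (adj_swap j ?ki))"
      using less.hyps[OF n1, of j] a1 ms[of i] i less.prems by simp
    have h2: "Ext ?kj = pi_act i (Ext (adj_swap i ?kj))"
      using less.hyps[OF n2, of i] a2 ms[of j] i less.prems by simp
    have c: "adj_swap i ?kj = adj_swap j ?ki" using adj_swap_commute[of i j k] 2 i less.prems by simp
    show ?thesis using step h1 h2 c pi_act_commute[OF 2] by simp
  next
    case 3
    then have "Suc i < length k" "k ! Suc i < k ! i" using less.prems i by auto
    then show ?thesis using equiv_ext_braid[OF less.hyps less.prems(1) i(1)] step i 3 by simp
  qed
qed

lemma pi_act_equiv_ext_plateau_after_descent:
  assumes IH: "\<And>k' j. inversions k' < inversions k \<Longrightarrow> mset k' = mset s \<Longrightarrow> 1 \<le> j \<Longrightarrow> j < length k' \<Longrightarrow>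
      k' ! (j - 1) = k' ! j \<Longrightarrow> pi_act j (Ext k') = (\<lambda>_. 0)"
    and k: "mset k = mset s" and i: "1 \<le> i" "Suc i < length k"
    and desc: "k ! i < k ! (i - 1)" and eq: "k ! Suc i = k ! i"
  shows "pi_act (Suc i) (pi_act i (Ext (adj_swap i k))) = (\<lambda>_. 0)"
proof -
  let ?x = "k ! (i - 1)" and ?y = "k ! i"
  define k1 where "k1 = adj_swap i k"
  define k2 where "k2 = adj_swap (Suc i) k1"
  have v1: "k1 ! (i - 1) = ?y" "k1 ! i = ?x" "k1 ! Suc i = ?y" "length k1 = length k"
    unfolding k1_def using i eq by (auto simp: nth_adj_swap)
  have v2: "k2 ! (i - 1) = ?y" "k2 ! i = ?y" "k2 ! Suc i = ?x" "length k2 = length k"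
    unfolding k2_def using i v1 by (auto simp: nth_adj_swap)
  have m: "mset k1 = mset s" "mset k2 = mset s" unfolding k2_def k1_def using i k by auto
  have "inversions k2 < inversions k"
    using inversions_adj_swap_desc[of i k] inversions_adj_swap_desc[of "Suc i" k1] i v1 desc
    unfolding k2_def k1_def by simp
  then have zero: "pi_act i (Ext k2) = (\<lambda>_. 0)" using IH[OF _ m(2), of i] i v1 v2 by simp
  have "Ext k1 = pi_act (Suc i) (Ext k2)"
    unfolding k2_def using equiv_ext_descent[OF m(1), of "Suc i"] i v1 desc by simp
  then have "pi_act (Suc i) (pi_act i (Ext k1)) = pi_act (Suc i) (pi_act i (pi_act (Suc i) (Ext k2)))"
    by simp
  also have "\<dots> = pi_act i (pi_act (Suc i) (pi_act i (Ext k2)))" by (rule pi_act_braid[symmetric])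
  finally show ?thesis unfolding zero k1_def by simp
qed

lemma pi_act_equiv_ext_plateau_before_descent:
  assumes IH: "\<And>k' j. inversions k' < inversions k \<Longrightarrow> mset k' = mset s \<Longrightarrow> 1 \<le> j \<Longrightarrow> j < length k' \<Longrightarrow>
      k' ! (j - 1) = k' ! j \<Longrightarrow> pi_act j (Ext k') = (\<lambda>_. 0)"
    and k: "mset k = mset s" and j: "1 \<le> j" "Suc j < length k"
    and eq: "k ! (j - 1) = k ! j" and desc: "k ! Suc j < k ! j"
  shows "pi_act j (pi_act (Suc j) (Ext (adj_swap (Suc j) k))) = (\<lambda>_. 0)"
proof -
  let ?x = "k ! j" and ?z = "k ! Suc j"
  define k1 where "k1 = adj_swap (Suc j) k"
  define k2 where "k2 = adj_swap j k1"
  have v1: "k1 ! (j - 1) = ?x" "k1 ! j = ?z" "k1 ! Suc j = ?x" "length k1 = length k"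
    unfolding k1_def using j eq by (auto simp: nth_adj_swap)
  have v2: "k2 ! (j - 1) = ?z" "k2 ! j = ?x" "k2 ! Suc j = ?x" "length k2 = length k"
    unfolding k2_def using j v1 by (auto simp: nth_adj_swap)
  have m: "mset k1 = mset s" "mset k2 = mset s" unfolding k2_def k1_def using j k by auto
  have "inversions k2 < inversions k"
    using inversions_adj_swap_desc[of "Suc j" k] inversions_adj_swap_desc[of j k1] j v1 desc
    unfolding k2_def k1_def by simp
  then have zero: "pi_act (Suc j) (Ext k2) = (\<lambda>_. 0)" using IH[OF _ m(2), of "Suc j"] j v1 v2 by simp
  have "Ext k1 = pi_act j (Ext k2)"
    unfolding k2_def using equiv_ext_descent[OF m(1), of j] j v1 desc by simp
  then have "pi_act j (pi_act (Suc j) (Ext k1)) = pi_act j (pi_act (Suc j) (pi_act j (Ext k2)))"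
    by simp
  also have "\<dots> = pi_act (Suc j) (pi_act j (pi_act (Suc j) (Ext k2)))" by (rule pi_act_braid)
  finally show ?thesis unfolding zero k1_def by simp
qed

lemma pi_act_equiv_ext_equal: "mset k = mset s \<Longrightarrow> 1 \<le> j \<Longrightarrow> j < length k \<Longrightarrow> k ! (j - 1) = k ! j \<Longrightarrow>
  pi_act j (Ext k) = (\<lambda>_. 0)"
proof (induction "inversions k" arbitrary: k j rule: less_induct)
  case less
  show ?case
  proof (cases "sorted k")
    case True
    then have "k = s" using sorted_eq_s less.prems by simp
    then show ?thesis using equiv_ext_sorted[of k s y] True y_inv less.prems length_s by simp
  next
    case ns: False
    define i where "i = first_descent k"
    have i: "1 \<le> i" "i < length k" "k ! i < k ! (i - 1)" using first_descent_is_descent[OF ns] unfolding i_def by auto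
    have step: "Ext k = pi_act i (Ext (adj_swap i k))" using equiv_ext_step[OF less.prems(1) ns] unfolding i_def .
    have ij: "i \<noteq> j" using i less.prems by auto
    consider "Suc i < j \<or> Suc j < i" | "j = Suc i" | "i = Suc j" using ij by linarith
    then show ?thesis
    proof cases
      case 1
      have a1: "adj_swap i k ! (j - 1) = adj_swap i k ! j" using nth_adj_swap_far[of i k j] 1 i less.prems by simp
      have n1: "inversions (adj_swap i k) < inversions k" using inversions_adj_swap_desc[of i k] i by simp
      have h: "pi_act j (Ext (adj_swap i k)) = (\<lambda>_. 0)" using less.hyps[OF n1, of j] a1 i less.prems by simp
      have "pi_act j (Ext k) = pi_act i (pi_act j (Ext (adj_swap i k)))"
        using step 1 pi_act_commute[of i j] pi_act_commute[of j i] by auto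
      then show ?thesis using h by simp
    next
      case 2
      then have "Suc i < length k" "k ! Suc i = k ! i" using less.prems by auto
      from pi_act_equiv_ext_plateau_after_descent[OF less.hyps less.prems(1) i(1) this(1) i(3) this(2)]
      show ?thesis using step 2 by simp
    next
      case 3
      then have "Suc j < length k" "k ! Suc j < k ! j" using i by auto
      from pi_act_equiv_ext_plateau_before_descent[OF less.hyps less.prems(1,2) this(1) less.prems(4) this(2)]
      show ?thesis using step 3 by simp
    qed
  qed
qed

lemma pi_act_equiv_ext: "length k = r \<Longrightarrow> 1 \<le> j \<Longrightarrow> j < r \<Longrightarrow> pi_act j (Ext k) = pi_image Ext k j"
proof -
  assume a: "length k = r" "1 \<le> j" "j < r"
  show ?thesis
  proof (cases "mset k = mset s")
    case False
    then have "mset (adj_swap j k) \<noteq> mset s" using a by simp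
    then show ?thesis using False a by (simp add: equiv_ext_other pi_image_def)
  next
    case True
    consider "k ! (j - 1) < k ! j" | "k ! (j - 1) = k ! j" | "k ! j < k ! (j - 1)" by linarith
    then show ?thesis
    proof cases
      case 1
      have "Ext (adj_swap j k) = pi_act j (Ext (adj_swap j (adj_swap j k)))"
        using equiv_ext_descent[of "adj_swap j k" j] True a 1 by simp
      then show ?thesis using 1 a by (simp add: pi_image_def)
    next
      case 2
      then show ?thesis using pi_act_equiv_ext_equal[of k j] True a by (simp add: pi_image_def)
    next
      case 3
      have "Ext k = pi_act j (Ext (adj_swap j k))" using equiv_ext_descent[of k j] True a 3 by simp
      then have "pi_act j (Ext k) = (\<lambda>l. - Ext k l)" by (metis pi_act_quadratic)
      then show ?thesis using 3 by (simp add: pi_image_def)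
    qed
  qed
qed

lemma supported_equiv_ext: "supported n r (Ext k)"
proof (induction "inversions k" arbitrary: k rule: less_induct)
  case less
  show ?case
  proof (cases "mset k = mset s")
    case False then show ?thesis by (simp add: equiv_ext_other supported_def)
  next
    case True
    show ?thesis
    proof (cases "sorted k")
      case True' : True
      then show ?thesis using True y_supp by (simp add: equiv_ext_sorted)
    next
      case False
      then show ?thesis using True equiv_ext_step[OF True False] less.hyps[OF inversions_first_descent[OF False]] supported_pi_act
        by metis
    qed
  qed
qed

lemma equiv_ext_unique:
  assumes asc: "\<And>k j. k \<in> words n r \<Longrightarrow> mset k = mset s \<Longrightarrow> 1 \<le> j \<Longrightarrow> j < r \<Longrightarrow>
        k ! (j - 1) < k ! j \<Longrightarrow> c (adj_swap j k) = pi_act j (c k)"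
    and cs: "c s = y"
  shows "k \<in> words n r \<Longrightarrow> mset k = mset s \<Longrightarrow> c k = Ext k"
proof (induction "inversions k" arbitrary: k rule: less_induct)
  case less
  show ?case
  proof (cases "sorted k")
    case True
    then have "k = s" using sorted_eq_s less.prems by simp
    then show ?thesis using cs equiv_ext_sorted[of s s y] s_sorted by simp
  next
    case False
    define i where "i = first_descent k"
    have i: "1 \<le> i" "i < length k" "k ! i < k ! (i - 1)" using first_descent_is_descent[OF False] unfolding i_def by auto
    have lk: "length k = r" using less.prems by (simp add: length_words)
    let ?k' = "adj_swap i k"
    have k'w: "?k' \<in> words n r" using i lk less.prems adj_swap_words by simp
    have m': "mset ?k' = mset s" using i less.prems by simp
    have n': "inversions ?k' < inversions k" using inversions_adj_swap_desc[of i k] i by simp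
    have asc': "?k' ! (i - 1) < ?k' ! i" using i by simp
    have "c k = c (adj_swap i ?k')" using i by simp
    also have "\<dots> = pi_act i (c ?k')" using asc[OF k'w m' i(1) _ asc'] i lk by simp
    also have "\<dots> = pi_act i (Ext ?k')" using less.hyps[OF n' k'w m'] by simp
    also have "\<dots> = Ext k" using equiv_ext_step[OF less.prems(2) False] unfolding i_def by simp
    finally show ?thesis .
  qed
qed

definition ext_matrix :: "nat list \<Rightarrow> nat list \<Rightarrow> complex" where
  "ext_matrix l k = (if k \<in> words n r then Ext k l else 0)"

lemma ext_matrix_H_endo: "is_H_endo n r ext_matrix"
  unfolding is_H_endo_def
proof (intro conjI ballI allI impI)
  fix l k assume "l \<notin> words n r \<or> k \<notin> words n r"
  then show "ext_matrix l k = 0" using supported_equiv_ext unfolding ext_matrix_def supported_def by auto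
next
  fix i l k assume i: "i \<in> {1..<r}" and l: "l \<in> words n r" and k: "k \<in> words n r"
  have lk: "length k = r" using k by (simp add: length_words)
  have "(\<Sum>m\<in>words n r. ext_matrix l m * Pi i m k) =
     (if k ! (i - 1) < k ! i then ext_matrix l (adj_swap i k) else if k ! (i - 1) = k ! i then 0 else - ext_matrix l k)"
    using sum_mult_Pi[of k n r i "\<lambda>m. ext_matrix l m"] k i by simp
  also have "\<dots> = pi_image Ext k i l"
    using k i lk adj_swap_words[of i r k n] by (auto simp: ext_matrix_def pi_image_def)
  also have "\<dots> = pi_act i (Ext k) l" using pi_act_equiv_ext[of k i] lk i by simp
  also have "\<dots> = (\<Sum>m\<in>words n r. Pi i l m * ext_matrix m k)"
    using Pi_mult_sum[of n r "Ext k" i l] supported_equiv_ext i k by (simp add: ext_matrix_def)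
  finally show "(\<Sum>m\<in>words n r. ext_matrix l m * Pi i m k) = (\<Sum>m\<in>words n r. Pi i l m * ext_matrix m k)" .
qed

lemma ext_matrix_s: "ext_matrix l s = y l"
  using s_words equiv_ext_sorted[of s s y] s_sorted by (simp add: ext_matrix_def)

lemma ext_matrix_other_weight: "mset k \<noteq> mset s \<Longrightarrow> ext_matrix l k = 0"
  by (simp add: ext_matrix_def equiv_ext_other)

lemma ext_matrix_unique:
  assumes M: "is_H_endo n r M" and Ms: "\<And>l. M l s = y l"
    and other: "\<And>k l. k \<in> words n r \<Longrightarrow> mset k \<noteq> mset s \<Longrightarrow> M l k = 0"
  shows "M = ext_matrix"
proof (intro ext)
  fix l k
  show "M l k = ext_matrix l k"
  proof (cases "k \<in> words n r \<and> mset k = mset s")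
    case True
    have "(\<lambda>l. M l k) = Ext k"
      by (rule equiv_ext_unique[where c = "\<lambda>k l. M l k"])
        (use True M Ms H_endo_column_ascent in auto)
    then show ?thesis using True by (simp add: ext_matrix_def fun_eq_iff)
  next
    case False
    then show ?thesis
      using M other[of k l] ext_matrix_other_weight[of k l] by (auto simp: is_H_endo_def ext_matrix_def)
  qed
qed

end

definition psum :: "(nat \<Rightarrow> nat) \<Rightarrow> nat \<Rightarrow> nat" where
  "psum mu t = (\<Sum>u\<in>{1..<Suc t}. mu u)"

lemma psum_0[simp]: "psum mu 0 = 0" by (simp add: psum_def)

lemma psum_Suc: "psum mu (Suc t) = psum mu t + mu (Suc t)" by (simp add: psum_def)

lemma psum_mono: "t \<le> t' \<Longrightarrow> psum mu t \<le> psum mu t'"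
  unfolding psum_def by (rule sum_mono2) auto

lemma block_psum: "1 \<le> j \<Longrightarrow> block mu j l = take (mu j) (drop (psum mu (j - 1)) l)"
  by (cases j) (auto simp: block_def psum_def)

lemma take_psum_Suc: "take (psum mu (Suc t)) l = take (psum mu t) l @ block mu (Suc t) l"
  by (simp add: block_psum psum_Suc take_add)

lemma mset_block_Suc: "mset (block mu (Suc t) l) = mset (take (psum mu (Suc t)) l) - mset (take (psum mu t) l)"
  by (simp add: take_psum_Suc)

lemma length_block: "psum mu j \<le> length l \<Longrightarrow> 1 \<le> j \<Longrightarrow> length (block mu j l) = mu j"
  using psum_Suc[of mu "j - 1"] by (cases j) (auto simp: block_psum)

lemma set_block: "set (block mu j l) \<subseteq> set l"
  unfolding block_def by (meson in_set_dropD in_set_takeD subsetI)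

lemma in_block_nth: "x \<in> set (block mu j l) \<Longrightarrow> 1 \<le> j \<Longrightarrow>
  \<exists>e. e < mu j \<and> psum mu (j - 1) + e < length l \<and> x = l ! (psum mu (j - 1) + e)"
proof -
  assume x: "x \<in> set (block mu j l)" and j: "1 \<le> j"
  obtain e where e: "e < length (block mu j l)" "x = block mu j l ! e"
    using x by (auto simp: in_set_conv_nth)
  show ?thesis using e by (intro exI[of _ e]) (auto simp: block_psum[OF j])
qed

lemma length_filter_eq_count: "length (filter (\<lambda>x. x = i) xs) = count (mset xs) i"
  by (induction xs) auto

definition inner_pos :: "(nat \<Rightarrow> nat) \<Rightarrow> nat \<Rightarrow> bool" where
  "inner_pos mu j \<longleftrightarrow> (\<forall>t. psum mu t \<noteq> j)"

lemma mset_block_adj_swap_inner: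
  assumes "inner_pos mu j" "1 \<le> j" "j < length l" "1 \<le> t"
  shows "mset (block mu t (adj_swap j l)) = mset (block mu t l)"
proof (cases t)
  case 0
  then show ?thesis using assms by simp
next
  case (Suc t')
  then show ?thesis using assms by (simp add: inner_pos_def mset_block_Suc mset_take_adj_swap)
qed

lemma sorted_word_Suc: "sorted_word (Suc n) mu = sorted_word n mu @ replicate (mu (Suc n)) (Suc n)"
  by (simp add: sorted_word_def)

lemma sorted_word_0[simp]: "sorted_word 0 mu = []" by (simp add: sorted_word_def)

lemma length_sorted_word: "length (sorted_word n mu) = psum mu n"
  by (induction n) (auto simp: sorted_word_Suc psum_Suc)

lemma set_sorted_word: "set (sorted_word n mu) \<subseteq> {1..n}"
  by (induction n) (auto simp: sorted_word_Suc)

lemma sorted_sorted_word: "sorted (sorted_word n mu)"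
proof (induction n)
  case 0 then show ?case by simp
next
  case (Suc n)
  then show ?case using set_sorted_word[of n mu] by (auto simp: sorted_word_Suc sorted_append)
qed

lemma sorted_word_prefix: "t \<le> n \<Longrightarrow> \<exists>rest. sorted_word n mu = sorted_word t mu @ rest \<and> set rest \<subseteq> {Suc t..n}"
proof (induction n)
  case 0 then show ?case by simp
next
  case (Suc n)
  show ?case
  proof (cases "t = Suc n")
    case True then show ?thesis by (intro exI[of _ "[]"]) simp
  next
    case False
    then obtain rest where "sorted_word n mu = sorted_word t mu @ rest" "set rest \<subseteq> {Suc t..n}"
      using Suc by auto
    then show ?thesis using False Suc.prems
      by (intro exI[of _ "rest @ replicate (mu (Suc n)) (Suc n)"]) (auto simp: sorted_word_Suc)
  qed
qed

lemma count_sorted_word: "count (mset (sorted_word n mu)) j = (if j \<in> {1..n} then mu j else 0)"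
  by (induction n) (auto simp: sorted_word_Suc)

lemma inner_pos_sorted_word:
  assumes zero: "\<And>t. n < t \<Longrightarrow> mu t = 0" and j: "1 \<le> j" "j < length (sorted_word n mu)"
    and eq: "sorted_word n mu ! (j - 1) = sorted_word n mu ! j"
  shows "inner_pos mu j"
  unfolding inner_pos_def
proof (intro allI notI)
  fix t
  let ?s = "sorted_word n mu"
  assume c: "psum mu t = j"
  have tn: "t < n"
  proof (rule ccontr)
    assume "\<not> t < n"
    then have "psum mu t = psum mu n"
      unfolding psum_def using zero by (intro sum.mono_neutral_right) auto
    then show False using c j length_sorted_word by simp
  qed
  obtain rest where r: "?s = sorted_word t mu @ rest" "set rest \<subseteq> {Suc t..n}"
    using sorted_word_prefix[of t n mu] tn by auto
  have lt: "length (sorted_word t mu) = j" using c length_sorted_word by simp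
  have "?s ! (j - 1) \<in> set (sorted_word t mu)" using r lt j by (simp add: nth_append)
  then have "?s ! (j - 1) \<le> t" using set_sorted_word[of t mu] by auto
  moreover have "?s ! j \<in> set rest" using r lt j by (simp add: nth_append)
  then have "Suc t \<le> ?s ! j" using r by auto
  ultimately show False using eq by simp
qed

lemma Mat_zero: "A \<in> Mat n r \<Longrightarrow> i \<notin> {1..n} \<or> j \<notin> {1..n} \<Longrightarrow> A i j = 0"
  unfolding Mat_def by blast

lemma co_zero: "A \<in> Mat n r \<Longrightarrow> t \<notin> {1..n} \<Longrightarrow> co n A t = 0"
  unfolding co_def using Mat_zero by (auto intro!: sum.neutral)

lemma psum_co: "A \<in> Mat n r \<Longrightarrow> psum (co n A) n = r"
proof -
  assume A: "A \<in> Mat n r"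
  have "psum (co n A) n = (\<Sum>u\<in>{1..n}. \<Sum>i\<in>{1..n}. A i u)"
    unfolding psum_def co_def by (simp add: atLeastLessThanSuc_atLeastAtMost)
  also have "\<dots> = (\<Sum>i\<in>{1..n}. \<Sum>u\<in>{1..n}. A i u)" by (rule sum.swap)
  also have "\<dots> = r" using A by (simp add: Mat_def)
  finally show ?thesis .
qed

lemma Mat_le: "A \<in> Mat n r \<Longrightarrow> A i j \<le> r"
proof -
  assume A: "A \<in> Mat n r"
  show ?thesis
  proof (cases "i \<in> {1..n} \<and> j \<in> {1..n}")
    case True
    have "A i j \<le> (\<Sum>j'\<in>{1..n}. A i j')" using True by (intro member_le_sum) auto
    also have "\<dots> \<le> (\<Sum>i'\<in>{1..n}. \<Sum>j'\<in>{1..n}. A i' j')" using True by (intro member_le_sum) auto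
    finally show ?thesis using A by (simp add: Mat_def)
  next
    case False then show ?thesis using Mat_zero[OF A] by auto
  qed
qed

lemma finite_Mat[simp]: "finite (Mat n r)"
proof -
  let ?S = "{f :: nat \<times> nat \<Rightarrow> nat. \<forall>x. (x \<in> {1..n} \<times> {1..n} \<longrightarrow> f x \<in> {0..r}) \<and> (x \<notin> {1..n} \<times> {1..n} \<longrightarrow> f x = 0)}"
  have "finite ?S" by (rule finite_set_of_finite_funs) auto
  moreover have "Mat n r \<subseteq> curry ` ?S"
  proof
    fix A assume A: "A \<in> Mat n r"
    have "case_prod A \<in> ?S" using Mat_le[OF A] Mat_zero[OF A] by auto
    moreover have "A = curry (case_prod A)" by simp
    ultimately show "A \<in> curry ` ?S" by blast
  qed
  ultimately show ?thesis by (rule finite_surj)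
qed

abbreviation weight_word :: "nat \<Rightarrow> (nat \<Rightarrow> nat \<Rightarrow> nat) \<Rightarrow> nat list" where
  "weight_word n A \<equiv> sorted_word n (co n A)"

lemma weight_word_words: "A \<in> Mat n r \<Longrightarrow> weight_word n A \<in> words n r"
  using psum_co[of A n r] length_sorted_word set_sorted_word unfolding words_def by auto

lemma mset_eq_sorted_word_iff:
  assumes "k \<in> words n r"
  shows "mset k = mset (sorted_word n mu) \<longleftrightarrow> (\<forall>j\<in>{1..n}. content n k j = mu j)"
proof
  assume "mset k = mset (sorted_word n mu)"
  then show "\<forall>j\<in>{1..n}. content n k j = mu j"
    by (simp add: content_def length_filter_eq_count count_sorted_word)
next
  assume a: "\<forall>j\<in>{1..n}. content n k j = mu j"
  show "mset k = mset (sorted_word n mu)"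
  proof (rule multiset_eqI)
    fix j
    show "count (mset k) j = count (mset (sorted_word n mu)) j"
    proof (cases "j \<in> {1..n}")
      case True
      then show ?thesis using a by (simp add: content_def length_filter_eq_count count_sorted_word)
    next
      case False
      then have "j \<notin> set k" using assms by (auto simp: words_def)
      then show ?thesis using False by (auto simp: count_sorted_word count_mset_0_iff)
    qed
  qed
qed

text \<open>Entry \<open>(i, j)\<close> of \<open>word_matrix n mu l\<close> counts the letter \<open>i\<close> in block \<open>j\<close> of \<open>l\<close>; so
  \<open>yA n r A\<close> is the indicator of the words with matrix \<open>A\<close>.\<close>

definition word_matrix :: "nat \<Rightarrow> (nat \<Rightarrow> nat) \<Rightarrow> nat list \<Rightarrow> nat \<Rightarrow> nat \<Rightarrow> nat" where
  "word_matrix n mu l = (\<lambda>i j. if i \<in> {1..n} \<and> j \<in> {1..n} then count (mset (block mu j l)) i else 0)"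

lemma yA_word_matrix:
  assumes A: "A \<in> Mat n r"
  shows "yA n r A l = (if l \<in> words n r \<and> word_matrix n (co n A) l = A then 1 else 0)"
proof -
  have "word_matrix n (co n A) l = A \<longleftrightarrow>
      (\<forall>i\<in>{1..n}. \<forall>j\<in>{1..n}. count (mset (block (co n A) j l)) i = A i j)"
    using Mat_zero[OF A] by (auto simp: word_matrix_def fun_eq_iff)
  then show ?thesis unfolding yA_def by (simp add: length_filter_eq_count)
qed

lemma word_matrix_Mat:
  assumes l: "l \<in> words n r" and cn: "psum mu n = r"
  shows "word_matrix n mu l \<in> Mat n r" "\<And>j. j \<in> {1..n} \<Longrightarrow> co n (word_matrix n mu l) j = mu j"
proof -
  have lw: "length l = r" "set l \<subseteq> {1..n}" using l by (auto simp: words_def)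
  show co: "co n (word_matrix n mu l) j = mu j" if j: "j \<in> {1..n}" for j
  proof -
    have "co n (word_matrix n mu l) j = (\<Sum>i\<in>{1..n}. count (mset (block mu j l)) i)"
      unfolding co_def word_matrix_def using j by simp
    also have "\<dots> = length (block mu j l)"
      using set_block[of mu j l] lw by (simp add: count_mset sum_count_set)
    also have "\<dots> = mu j" using j psum_mono[of j n mu] cn lw by (intro length_block) auto
    finally show ?thesis .
  qed
  have "(\<Sum>i\<in>{1..n}. \<Sum>j\<in>{1..n}. word_matrix n mu l i j) = (\<Sum>j\<in>{1..n}. \<Sum>i\<in>{1..n}. word_matrix n mu l i j)"
    by (rule sum.swap)
  also have "\<dots> = (\<Sum>j\<in>{1..n}. mu j)" using co unfolding co_def by simp
  also have "\<dots> = r" using cn by (simp add: psum_def atLeastLessThanSuc_atLeastAtMost)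
  finally show "word_matrix n mu l \<in> Mat n r" unfolding Mat_def word_matrix_def by auto
qed

lemma mset_block_eq_if_word_matrix_eq:
  assumes "set l \<subseteq> {1..n}" "set l' \<subseteq> {1..n}" and c: "word_matrix n mu l = word_matrix n mu l'"
    and t: "1 \<le> t" "t \<le> n"
  shows "mset (block mu t l) = mset (block mu t l')"
proof (rule multiset_eqI)
  fix i
  show "count (mset (block mu t l)) i = count (mset (block mu t l')) i"
  proof (cases "i \<in> {1..n}")
    case True
    then show ?thesis using fun_cong[OF fun_cong[OF c, of i], of t] t by (simp add: word_matrix_def)
  next
    case False
    then have "i \<notin> set (block mu t l)" "i \<notin> set (block mu t l')"
      using set_block[of mu t l] set_block[of mu t l'] assms(1,2) by auto
    then show ?thesis by (metis count_mset_0_iff)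
  qed
qed

lemma word_matrix_mset_take:
  assumes l: "l \<in> words n r" and l': "l' \<in> words n r" and c: "word_matrix n mu l = word_matrix n mu l'"
  shows "t \<le> n \<Longrightarrow> mset (take (psum mu t) l) = mset (take (psum mu t) l')"
proof (induction t)
  case 0 then show ?case by simp
next
  case (Suc t)
  have "mset (block mu (Suc t) l) = mset (block mu (Suc t) l')"
    using l l' Suc.prems by (intro mset_block_eq_if_word_matrix_eq[OF _ _ c]) (auto simp: words_def)
  then show ?case using Suc by (simp add: take_psum_Suc)
qed

definition column_word :: "nat \<Rightarrow> (nat \<Rightarrow> nat \<Rightarrow> nat) \<Rightarrow> nat \<Rightarrow> nat list" where
  "column_word n C j = concat (map (\<lambda>i. replicate (C i j) i) [1..<Suc n])"

definition rep_word :: "nat \<Rightarrow> (nat \<Rightarrow> nat \<Rightarrow> nat) \<Rightarrow> nat list" where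
  "rep_word n C = concat (map (column_word n C) [1..<Suc n])"

lemma length_column_word: "length (column_word n C j) = (\<Sum>i\<in>{1..n}. C i j)"
  by (induction n) (auto simp: column_word_def)

lemma count_column_word: "count (mset (column_word n C j)) i = (if i \<in> {1..n} then C i j else 0)"
  by (induction n) (auto simp: column_word_def)

lemma set_column_word: "set (column_word n C j) \<subseteq> {1..n}"
  by (induction n) (auto simp: column_word_def)

lemma concat_map_upt_split: "1 \<le> j \<Longrightarrow> j \<le> n \<Longrightarrow>
  concat (map f [1..<Suc n]) = concat (map f [1..<j]) @ f j @ concat (map f [Suc j..<Suc n])"
proof -
  assume j: "1 \<le> j" "j \<le> n"
  have "[1..<Suc n] = [1..<j] @ j # [Suc j..<Suc n]"
  proof -
    have "[1..<Suc n] = [1..<j] @ [j..<Suc n]" using upt_add_eq_append[of 1 j "Suc n - j"] j by simp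
    moreover have "[j..<Suc n] = j # [Suc j..<Suc n]" using j by (simp add: upt_conv_Cons)
    ultimately show ?thesis by simp
  qed
  then show ?thesis by simp
qed

lemma length_concat_map_upt: "(\<And>j. 1 \<le> j \<Longrightarrow> length (f j) = mu j) \<Longrightarrow>
  length (concat (map f [1..<Suc t])) = psum mu t"
  by (induction t) (auto simp: psum_Suc)

lemma block_concat_map_upt:
  assumes len: "\<And>j. 1 \<le> j \<Longrightarrow> length (f j) = mu j" and j: "1 \<le> j" "j \<le> n"
  shows "block mu j (concat (map f [1..<Suc n])) = f j"
proof -
  have l1: "length (concat (map f [1..<j])) = psum mu (j - 1)"
    using length_concat_map_upt[of f mu "j - 1", OF len] j by simp
  show ?thesis using concat_map_upt_split[OF j, of f] l1 len[OF j(1)] by (simp add: block_psum[OF j(1)])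
qed

lemma co_eq_sum: "co n C j = (\<Sum>i\<in>{1..n}. C i j)" by (simp add: co_def)

lemma block_rep_word: "1 \<le> j \<Longrightarrow> j \<le> n \<Longrightarrow> block (co n C) j (rep_word n C) = column_word n C j"
  unfolding rep_word_def by (rule block_concat_map_upt) (auto simp: length_column_word co_eq_sum)

lemma length_rep_word: "length (rep_word n C) = psum (co n C) n"
  unfolding rep_word_def by (rule length_concat_map_upt) (simp add: length_column_word co_eq_sum)

lemma rep_word_words: "C \<in> Mat n r \<Longrightarrow> rep_word n C \<in> words n r"
  using length_rep_word[of n C] psum_co[of C n r] set_column_word[of n C]
  by (auto simp: words_def rep_word_def)

lemma word_matrix_rep_word: "C \<in> Mat n r \<Longrightarrow> word_matrix n (co n C) (rep_word n C) = C"
  unfolding word_matrix_def using block_rep_word count_column_word Mat_zero[of C n r] by (auto simp: fun_eq_iff)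

lemma word_matrix_adj_swap_inner:
  assumes "inner_pos mu j" "1 \<le> j" "j < length l"
  shows "word_matrix n mu (adj_swap j l) = word_matrix n mu l"
  using mset_block_adj_swap_inner[OF assms] by (auto simp: word_matrix_def fun_eq_iff)

text \<open>Words with the same matrix differ by a permutation inside the blocks, so a function that is
  invariant under swaps at inner positions of the blocks is constant on them: both words can be
  sorted blockwise, with the same result.\<close>

definition blockwise_sorted :: "nat \<Rightarrow> (nat \<Rightarrow> nat) \<Rightarrow> nat list \<Rightarrow> bool" where
  "blockwise_sorted r mu l \<longleftrightarrow> (\<forall>j. 1 \<le> j \<longrightarrow> j < r \<longrightarrow> inner_pos mu j \<longrightarrow> l ! (j - 1) \<le> l ! j)"

lemma blockwise_sorted_exists:
  assumes z: "\<And>j l. 1 \<le> j \<Longrightarrow> j < r \<Longrightarrow> inner_pos mu j \<Longrightarrow> l \<in> words n r \<Longrightarrow> l ! j < l ! (j - 1) \<Longrightarrow>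
        z (adj_swap j l) = z l"
  shows "l \<in> words n r \<Longrightarrow> \<exists>l'. l' \<in> words n r \<and> blockwise_sorted r mu l' \<and> word_matrix n mu l' = word_matrix n mu l \<and> z l' = z l"
proof (induction "inversions l" arbitrary: l rule: less_induct)
  case less
  show ?case
  proof (cases "blockwise_sorted r mu l")
    case True then show ?thesis using less.prems by blast
  next
    case False
    then obtain j where j: "1 \<le> j" "j < r" "inner_pos mu j" "l ! j < l ! (j - 1)"
      unfolding blockwise_sorted_def by (auto simp: not_le)
    have lr: "length l = r" using less.prems by (simp add: length_words)
    let ?l1 = "adj_swap j l"
    have w1: "?l1 \<in> words n r" using adj_swap_words j less.prems by blast
    have n1: "inversions ?l1 < inversions l" using inversions_adj_swap_desc[of j l] j lr by simp
    have c1: "word_matrix n mu ?l1 = word_matrix n mu l" using word_matrix_adj_swap_inner j lr by simp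
    have z1: "z ?l1 = z l" using z j less.prems by blast
    show ?thesis using less.hyps[OF n1 w1] c1 z1 by auto
  qed
qed

lemma sorted_block_blockwise_sorted:
  assumes b: "blockwise_sorted r mu l" and lr: "length l = r" and cn: "psum mu n = r" and t: "1 \<le> t" "t \<le> n"
  shows "sorted (block mu t l)"
  unfolding sorted_iff_nth_Suc
proof (intro allI impI)
  fix p assume p: "Suc p < length (block mu t l)"
  obtain t' where t': "t = Suc t'" using t by (cases t) auto
  let ?c = "psum mu t'"
  have bt: "block mu t l = take (mu t) (drop ?c l)" using block_psum[OF t(1)] t' by simp
  have ct: "psum mu t = ?c + mu t" using psum_Suc[of mu t'] t' by simp
  have ctr: "psum mu t \<le> r" using psum_mono[of t n mu] t cn by simp
  have pm: "Suc p < mu t" using p bt by simp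
  have c_le: "?c \<le> length l" using p bt by auto
  have nth1: "block mu t l ! p = l ! (?c + p)" "block mu t l ! Suc p = l ! (?c + Suc p)"
    using p bt c_le by simp_all
  let ?j = "?c + Suc p"
  have nc: "inner_pos mu ?j" unfolding inner_pos_def
  proof
    fix t''
    show "psum mu t'' \<noteq> ?j"
    proof (cases "t'' \<le> t'")
      case True then show ?thesis using psum_mono[OF True, of mu] by simp
    next
      case False then have "t \<le> t''" using t' by simp
      then show ?thesis using psum_mono[of t t'' mu] ct pm by simp
    qed
  qed
  have j1: "1 \<le> ?j" by simp
  have j2: "?j < r" using ct ctr pm by simp
  have "l ! (?j - 1) \<le> l ! ?j" using b j1 j2 nc unfolding blockwise_sorted_def by blast
  then show "block mu t l ! p \<le> block mu t l ! Suc p" using nth1 by simp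
qed

lemma blockwise_sorted_unique:
  assumes l: "l \<in> words n r" and l': "l' \<in> words n r"
    and b: "blockwise_sorted r mu l" "blockwise_sorted r mu l'"
    and c: "word_matrix n mu l = word_matrix n mu l'" and cn: "psum mu n = r"
  shows "l = l'"
proof -
  have lw: "length l = r" "set l \<subseteq> {1..n}" "length l' = r" "set l' \<subseteq> {1..n}"
    using l l' by (auto simp: words_def)
  have block_eq: "block mu t l = block mu t l'" if t: "1 \<le> t" "t \<le> n" for t
    using sorted_mset_unique[OF sorted_block_blockwise_sorted[OF b(1) lw(1) cn t]
        sorted_block_blockwise_sorted[OF b(2) lw(3) cn t]
        mset_block_eq_if_word_matrix_eq[OF lw(2,4) c t]] .
  have "t \<le> n \<Longrightarrow> take (psum mu t) l = take (psum mu t) l'" for t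
    by (induction t) (simp_all add: take_psum_Suc block_eq)
  then have "take r l = take r l'" using cn by (metis order_refl)
  then show ?thesis using lw by simp
qed

lemma word_matrix_invariant:
  assumes z: "\<And>j l. 1 \<le> j \<Longrightarrow> j < r \<Longrightarrow> inner_pos mu j \<Longrightarrow> l \<in> words n r \<Longrightarrow> l ! j < l ! (j - 1) \<Longrightarrow>
        z (adj_swap j l) = z l"
    and cn: "psum mu n = r"
    and l: "l \<in> words n r" and l': "l' \<in> words n r" and c: "word_matrix n mu l = word_matrix n mu l'"
  shows "z l = z l'"
proof -
  obtain m where m: "m \<in> words n r" "blockwise_sorted r mu m" "word_matrix n mu m = word_matrix n mu l" "z m = z l"
    using blockwise_sorted_exists[OF z l] by blast
  obtain m' where m': "m' \<in> words n r" "blockwise_sorted r mu m'" "word_matrix n mu m' = word_matrix n mu l'" "z m' = z l'"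
    using blockwise_sorted_exists[OF z l'] by blast
  have "m = m'" using blockwise_sorted_unique[OF m(1) m'(1) m(2) m'(2) _ cn] m(3) m'(3) c by simp
  then show ?thesis using m m' by simp
qed

section \<open>The standard basis \<open>e\<^sub>A\<close>\<close>

lemma pi_act_yA_inner:
  assumes A: "A \<in> Mat n r" and j: "1 \<le> j" "j < r" "inner_pos (co n A) j"
  shows "pi_act j (yA n r A) = (\<lambda>_. 0)"
proof
  fix l
  show "pi_act j (yA n r A) l = 0"
  proof (cases "1 \<le> j \<and> j < length l \<and> l ! j < l ! (j - 1)")
    case True
    have "yA n r A (adj_swap j l) = yA n r A l"
      using True j adj_swap_words[of j r l n] word_matrix_adj_swap_inner[of "co n A" j l n]
      by (simp add: yA_word_matrix[OF A])
    then show ?thesis using True by (simp add: pi_act_def)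
  qed (auto simp: pi_act_def)
qed

lemma cyclic_vector_yA:
  assumes A: "A \<in> Mat n r"
  shows "cyclic_vector n r (weight_word n A) (yA n r A)"
proof
  show "weight_word n A \<in> words n r" using weight_word_words[OF A] .
  show "sorted (weight_word n A)" by (rule sorted_sorted_word)
  show "supported n r (yA n r A)" by (simp add: supported_def yA_def)
  fix j assume j: "1 \<le> j" "j < r" "weight_word n A ! (j - 1) = weight_word n A ! j"
  have "length (weight_word n A) = r" using weight_word_words[OF A] by (simp add: length_words)
  then have "inner_pos (co n A) j"
    using j co_zero[OF A] by (intro inner_pos_sorted_word) auto
  then show "pi_act j (yA n r A) = (\<lambda>_. 0)" using pi_act_yA_inner[OF A] j by simp
qed

lemma eA_eq_ext_matrix:
  assumes A: "A \<in> Mat n r"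
  shows "eA n r A = cyclic_vector.ext_matrix n r (weight_word n A) (yA n r A)"
proof -
  interpret cyclic_vector n r "weight_word n A" "yA n r A" by (rule cyclic_vector_yA[OF A])
  have weight: "mset k = mset (weight_word n A) \<longleftrightarrow> \<not> (\<exists>j\<in>{1..n}. content n k j \<noteq> co n A j)"
    if "k \<in> words n r" for k
    using mset_eq_sorted_word_iff[OF that] by blast
  show ?thesis unfolding eA_def
  proof (rule the_equality)
    show "is_H_endo n r ext_matrix \<and> (\<forall>l. ext_matrix l (weight_word n A) = yA n r A l) \<and>
        (\<forall>k\<in>words n r. (\<exists>j\<in>{1..n}. content n k j \<noteq> co n A j) \<longrightarrow> (\<forall>l. ext_matrix l k = 0))"
      using ext_matrix_H_endo ext_matrix_s ext_matrix_other_weight weight by blast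
  next
    fix M
    assume "is_H_endo n r M \<and> (\<forall>l. M l (weight_word n A) = yA n r A l) \<and>
        (\<forall>k\<in>words n r. (\<exists>j\<in>{1..n}. content n k j \<noteq> co n A j) \<longrightarrow> (\<forall>l. M l k = 0))"
    then show "M = ext_matrix" using weight by (intro ext_matrix_unique) auto
  qed
qed

lemma eA_eq_equiv_ext:
  assumes A: "A \<in> Mat n r"
  shows "eA n r A l m = (if m \<in> words n r then equiv_ext (weight_word n A) (yA n r A) m l else 0)"
  using eA_eq_ext_matrix[OF A] cyclic_vector.ext_matrix_def[OF cyclic_vector_yA[OF A]] by simp

lemma eA_H_endo: "A \<in> Mat n r \<Longrightarrow> is_H_endo n r (eA n r A)"
  using eA_eq_ext_matrix cyclic_vector.ext_matrix_H_endo[OF cyclic_vector_yA] by simp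

lemma eA_weight_word: "A \<in> Mat n r \<Longrightarrow> eA n r A l (weight_word n A) = yA n r A l"
  using eA_eq_ext_matrix cyclic_vector.ext_matrix_s[OF cyclic_vector_yA] by simp

lemma eA_other_weight:
  "A \<in> Mat n r \<Longrightarrow> mset m \<noteq> mset (weight_word n A) \<Longrightarrow> eA n r A l m = 0"
  using eA_eq_ext_matrix cyclic_vector.ext_matrix_other_weight[OF cyclic_vector_yA] by simp

lemma co_eqI: "A \<in> Mat n r \<Longrightarrow> C \<in> Mat n r \<Longrightarrow> (\<forall>j\<in>{1..n}. co n A j = co n C j) \<Longrightarrow> co n A = co n C"
  using co_zero[of A n r] co_zero[of C n r] by (auto simp: fun_eq_iff)

lemma co_eq_if_mset_weight_word:
  assumes A: "A \<in> Mat n r" and C: "C \<in> Mat n r" and m: "mset (weight_word n A) = mset (weight_word n C)"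
  shows "co n A = co n C"
proof (rule co_eqI[OF A C], rule ballI)
  fix j assume "j \<in> {1..n}"
  then show "co n A j = co n C j" using arg_cong[OF m, of "\<lambda>M. count M j"] by (simp add: count_sorted_word)
qed

lemma eA_rep_word:
  assumes C: "C \<in> Mat n r" and C0: "C0 \<in> Mat n r"
  shows "eA n r C (rep_word n C0) (weight_word n C0) = (if C = C0 then 1 else 0)"
proof (cases "co n C = co n C0")
  case True
  have "eA n r C (rep_word n C0) (weight_word n C0) = yA n r C (rep_word n C0)" using eA_weight_word[OF C] True by simp
  also have "\<dots> = (if C = C0 then 1 else 0)"
    using yA_word_matrix[OF C] rep_word_words[OF C0] word_matrix_rep_word[OF C0] True by auto
  finally show ?thesis .
next
  case False
  then have "mset (weight_word n C0) \<noteq> mset (weight_word n C)" using co_eq_if_mset_weight_word[OF C0 C] by auto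
  then have "eA n r C (rep_word n C0) (weight_word n C0) = 0" using eA_other_weight[OF C] by simp
  moreover have "C \<noteq> C0" using False by auto
  ultimately show ?thesis by simp
qed

lemma sum_eA_rep_word:
  assumes C0: "C0 \<in> Mat n r"
  shows "(\<Sum>C\<in>Mat n r. c C * eA n r C (rep_word n C0) (weight_word n C0)) = c C0"
proof -
  have "(\<Sum>C\<in>Mat n r. c C * eA n r C (rep_word n C0) (weight_word n C0)) = (\<Sum>C\<in>Mat n r. if C = C0 then c C else 0)"
    by (rule sum.cong) (auto simp: eA_rep_word C0)
  also have "\<dots> = c C0" using C0 by (simp add: sum.delta')
  finally show ?thesis .
qed

lemma coord_eqI:
  assumes z: "\<And>C. C \<notin> Mat n r \<Longrightarrow> c C = 0"
    and M: "M = (\<lambda>l m. \<Sum>C\<in>Mat n r. c C * eA n r C l m)"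
  shows "coord n r M = c"
  unfolding coord_def
proof (rule the_equality)
  show "(\<forall>A. A \<notin> Mat n r \<longrightarrow> c A = 0) \<and> M = (\<lambda>l m. \<Sum>A\<in>Mat n r. c A * eA n r A l m)"
    using z M by blast
next
  fix c' assume a: "(\<forall>A. A \<notin> Mat n r \<longrightarrow> c' A = 0) \<and> M = (\<lambda>l m. \<Sum>A\<in>Mat n r. c' A * eA n r A l m)"
  show "c' = c"
  proof
    fix C0
    show "c' C0 = c C0"
    proof (cases "C0 \<in> Mat n r")
      case True
      have "M (rep_word n C0) (weight_word n C0) = c' C0" using a sum_eA_rep_word[OF True, of c'] by simp
      moreover have "M (rep_word n C0) (weight_word n C0) = c C0" using M sum_eA_rep_word[OF True, of c] by simp
      ultimately show ?thesis by simp
    next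
      case False then show ?thesis using a z by simp
    qed
  qed
qed

lemma pi_act_rhov_yA_inner:
  assumes A: "A \<in> Mat n r" and g: "g \<in> gens n" and j: "1 \<le> j" "j < r" "inner_pos (co n A) j"
  shows "pi_act j (rhov n r g (yA n r A)) = (\<lambda>_. 0)"
proof -
  have "supported n r (yA n r A)" by (simp add: supported_def yA_def)
  then have "pi_act j (rhov n r g (yA n r A)) = rhov n r g (pi_act j (yA n r A))"
    using rhov_pi_act[OF g _ j(1,2)] by simp
  also have "\<dots> = (\<lambda>_. 0)" using pi_act_yA_inner[OF A j] by (simp add: rhov_def)
  finally show ?thesis .
qed

lemma rhov_yA_word_matrix_invariant:
  assumes A: "A \<in> Mat n r" and g: "g \<in> gens n" and l: "l \<in> words n r" "l' \<in> words n r"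
    and c: "word_matrix n (co n A) l = word_matrix n (co n A) l'"
  shows "rhov n r g (yA n r A) l = rhov n r g (yA n r A) l'"
proof (rule word_matrix_invariant[OF _ psum_co[OF A] l c])
  fix j l assume j: "1 \<le> j" "j < r" "inner_pos (co n A) j" "l \<in> words n r" "l ! j < l ! (j - 1)"
  then have "pi_act j (rhov n r g (yA n r A)) l = 0" and "j < length l"
    using pi_act_rhov_yA_inner[OF A g j(1-3)] by (simp_all add: length_words)
  then show "rhov n r g (yA n r A) (adj_swap j l) = rhov n r g (yA n r A) l"
    using j by (simp add: pi_act_def)
qed

lemma cyclic_vector_rhov_yA:
  assumes A: "A \<in> Mat n r" and g: "g \<in> gens n"
  shows "cyclic_vector n r (weight_word n A) (rhov n r g (yA n r A))"
proof
  show "weight_word n A \<in> words n r" using weight_word_words[OF A] .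
  show "sorted (weight_word n A)" by (rule sorted_sorted_word)
  show "supported n r (rhov n r g (yA n r A))" using supported_rhov[OF g] .
  fix j assume j: "1 \<le> j" "j < r" "weight_word n A ! (j - 1) = weight_word n A ! j"
  have "length (weight_word n A) = r" using weight_word_words[OF A] by (simp add: length_words)
  then have "inner_pos (co n A) j"
    using j co_zero[OF A] by (intro inner_pos_sorted_word) auto
  then show "pi_act j (rhov n r g (yA n r A)) = (\<lambda>_. 0)" using pi_act_rhov_yA_inner[OF A g] j by simp
qed

lemma sum_yA_class_function:
  assumes A: "A \<in> Mat n r" and z: "supported n r z"
    and inv: "\<And>l l'. l \<in> words n r \<Longrightarrow> l' \<in> words n r \<Longrightarrow>
        word_matrix n (co n A) l = word_matrix n (co n A) l' \<Longrightarrow> z l = z l'"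
  shows "(\<Sum>C\<in>Mat n r. if co n C = co n A then z (rep_word n C) * yA n r C l else 0) = z l"
proof (cases "l \<in> words n r")
  case False
  then show ?thesis using z by (auto simp: yA_def supported_def intro!: sum.neutral)
next
  case l: True
  let ?C0 = "word_matrix n (co n A) l"
  have C0: "?C0 \<in> Mat n r" using word_matrix_Mat(1)[OF l psum_co[OF A]] .
  have coC0: "co n ?C0 = co n A"
    using co_eqI[OF C0 A] word_matrix_Mat(2)[OF l psum_co[OF A]] by simp
  have "(\<Sum>C\<in>Mat n r. if co n C = co n A then z (rep_word n C) * yA n r C l else 0) =
      (\<Sum>C\<in>Mat n r. if C = ?C0 then z (rep_word n C) else 0)"
    using coC0 l by (intro sum.cong refl) (auto simp: yA_word_matrix)
  also have "\<dots> = z (rep_word n ?C0)" using C0 by (simp add: sum.delta')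
  also have "\<dots> = z l"
    using inv[OF rep_word_words[OF C0] l] word_matrix_rep_word[OF C0] coC0 by simp
  finally show ?thesis .
qed

context
  fixes n r :: nat and A :: "nat \<Rightarrow> nat \<Rightarrow> nat" and g :: gen
  assumes A: "A \<in> Mat n r" and g: "g \<in> gens n"
begin

interpretation cyclic_vector n r "weight_word n A" "rhov n r g (yA n r A)"
  by (rule cyclic_vector_rhov_yA[OF A g])

lemma rho_eA_column:
  assumes m: "m \<in> words n r" "mset m = mset (weight_word n A)"
  shows "(\<lambda>l. \<Sum>k\<in>words n r. rho g l k * eA n r A k m) = Ext m"
proof (rule equiv_ext_unique[OF _ _ m])
  fix m' j assume a: "m' \<in> words n r" "mset m' = mset (weight_word n A)" "1 \<le> j" "j < r"
    "m' ! (j - 1) < m' ! j"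
  have "(\<lambda>k. eA n r A k (adj_swap j m')) = pi_act j (\<lambda>k. eA n r A k m')"
    using H_endo_column_ascent[OF eA_H_endo[OF A] a(1,3,4,5)] .
  then have "(\<lambda>l. \<Sum>k\<in>words n r. rho g l k * eA n r A k (adj_swap j m')) =
      rhov n r g (pi_act j (\<lambda>k. eA n r A k m'))"
    by (simp add: rhov_def fun_eq_iff)
  also have "\<dots> = pi_act j (rhov n r g (\<lambda>k. eA n r A k m'))"
    using rhov_pi_act[OF g supported_H_endo_column[OF eA_H_endo[OF A]] a(3,4)] .
  finally show "(\<lambda>l. \<Sum>k\<in>words n r. rho g l k * eA n r A k (adj_swap j m')) =
      pi_act j (\<lambda>l. \<Sum>k\<in>words n r. rho g l k * eA n r A k m')"
    by (simp add: rhov_def)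
next
  show "(\<lambda>l. \<Sum>k\<in>words n r. rho g l k * eA n r A k (weight_word n A)) = rhov n r g (yA n r A)"
    using eA_weight_word[OF A] by (simp add: rhov_def)
qed

lemma sum_eA_column:
  assumes m: "m \<in> words n r" "mset m = mset (weight_word n A)"
  shows "(\<lambda>l. \<Sum>C\<in>Mat n r. (if co n C = co n A then rhov n r g (yA n r A) (rep_word n C) else 0)
      * eA n r C l m) = Ext m"
proof (rule equiv_ext_unique[OF _ _ m])
  fix m' j assume a: "m' \<in> words n r" "mset m' = mset (weight_word n A)" "1 \<le> j" "j < r"
    "m' ! (j - 1) < m' ! j"
  have "\<And>C. C \<in> Mat n r \<Longrightarrow> (\<lambda>l. eA n r C l (adj_swap j m')) = pi_act j (\<lambda>l. eA n r C l m')"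
    using H_endo_column_ascent[OF eA_H_endo a(1,3,4,5)] by blast
  then show "(\<lambda>l. \<Sum>C\<in>Mat n r. (if co n C = co n A then rhov n r g (yA n r A) (rep_word n C) else 0)
        * eA n r C l (adj_swap j m')) =
      pi_act j (\<lambda>l. \<Sum>C\<in>Mat n r. (if co n C = co n A then rhov n r g (yA n r A) (rep_word n C) else 0)
        * eA n r C l m')"
    by (simp add: pi_act_sum pi_act_scale fun_eq_iff)
next
  have "(if co n C = co n A then rhov n r g (yA n r A) (rep_word n C) else 0) * eA n r C l (weight_word n A)
      = (if co n C = co n A then rhov n r g (yA n r A) (rep_word n C) * yA n r C l else 0)"
    if "C \<in> Mat n r" for C l
    using eA_weight_word[OF that, of l] by auto
  then show "(\<lambda>l. \<Sum>C\<in>Mat n r. (if co n C = co n A then rhov n r g (yA n r A) (rep_word n C) else 0)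
      * eA n r C l (weight_word n A)) = rhov n r g (yA n r A)"
    using sum_yA_class_function[OF A supported_rhov[OF g] rhov_yA_word_matrix_invariant[OF A g]]
    by (simp add: fun_eq_iff)
qed

lemma rho_eA_expansion:
  "(\<lambda>l m. \<Sum>k\<in>words n r. rho g l k * eA n r A k m) =
    (\<lambda>l m. \<Sum>C\<in>Mat n r. (if co n C = co n A then rhov n r g (yA n r A) (rep_word n C) else 0)
      * eA n r C l m)"
proof (intro ext)
  fix l m
  show "(\<Sum>k\<in>words n r. rho g l k * eA n r A k m) =
      (\<Sum>C\<in>Mat n r. (if co n C = co n A then rhov n r g (yA n r A) (rep_word n C) else 0) * eA n r C l m)"
  proof (cases "m \<in> words n r \<and> mset m = mset (weight_word n A)")
    case True
    then show ?thesis using rho_eA_column[of m] sum_eA_column[of m] by (metis (no_types, lifting))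
  next
    case False
    have "eA n r C l' m = 0" if C: "C \<in> Mat n r" "co n C = co n A" for C l'
    proof (cases "m \<in> words n r")
      case True
      then have "mset m \<noteq> mset (weight_word n C)" using False C(2) by simp
      then show ?thesis using eA_other_weight[OF C(1)] by simp
    qed (simp add: eA_eq_equiv_ext[OF C(1)])
    then show ?thesis using A by (auto intro!: sum.neutral)
  qed
qed

lemma S_act_eq:
  "S_act n r g B A = (if B \<in> Mat n r \<and> co n B = co n A then rhov n r g (yA n r A) (rep_word n B) else 0)"
proof -
  have "coord n r (\<lambda>l m. \<Sum>k\<in>words n r. rho g l k * eA n r A k m) =
    (\<lambda>C. if C \<in> Mat n r \<and> co n C = co n A then rhov n r g (yA n r A) (rep_word n C) else 0)"
    by (rule coord_eqI) (auto simp: rho_eA_expansion intro!: sum.cong)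
  then show ?thesis unfolding S_act_def by (rule fun_cong)
qed

end

lemma rep_word_split: "t \<le> n \<Longrightarrow> rep_word n C = concat (map (column_word n C) [1..<Suc t]) @ concat (map (column_word n C) [Suc t..<Suc n])"
proof -
  assume t: "t \<le> n"
  have "[1..<Suc n] = [1..<Suc t] @ [Suc t..<Suc n]" using upt_add_eq_append[of 1 "Suc t" "n - t"] t by simp
  then show ?thesis unfolding rep_word_def by simp
qed

lemma length_rep_word_prefix: "length (concat (map (column_word n C) [1..<Suc t])) = psum (co n C) t"
  by (rule length_concat_map_upt) (simp add: length_column_word co_eq_sum)

lemma take_rep_word: "t \<le> n \<Longrightarrow> take (psum (co n C) t) (rep_word n C) = concat (map (column_word n C) [1..<Suc t])"
  using rep_word_split[of t n C] length_rep_word_prefix[of n C t] by simp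

lemma drop_rep_word: "t \<le> n \<Longrightarrow> drop (psum (co n C) t) (rep_word n C) = concat (map (column_word n C) [Suc t..<Suc n])"
  using rep_word_split[of t n C] length_rep_word_prefix[of n C t] by simp

lemma set_column_word_pos: "x \<in> set (column_word n C j) \<Longrightarrow> x \<in> {1..n} \<and> 0 < C x j"
proof -
  assume x: "x \<in> set (column_word n C j)"
  then have "count (mset (column_word n C j)) x \<noteq> 0" by simp
  then show ?thesis by (simp add: count_column_word split: if_splits)
qed

lemma sorted_column_word: "sorted (column_word n C j)"
proof (induction n)
  case 0 then show ?case by (simp add: column_word_def)
next
  case (Suc n)
  have "column_word (Suc n) C j = column_word n C j @ replicate (C (Suc n) j) (Suc n)" by (simp add: column_word_def)
  moreover have "set (column_word n C j) \<subseteq> {1..n}" by (rule set_column_word)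
  ultimately show ?case using Suc by (auto simp: sorted_append)
qed

lemma col_block_diag_column_word_less: "col_block_diag B \<Longrightarrow> x \<in> set (column_word n B j) \<Longrightarrow> y \<in> set (column_word n B j') \<Longrightarrow> j < j' \<Longrightarrow> x < y"
proof (rule ccontr)
  assume c: "col_block_diag B" and x: "x \<in> set (column_word n B j)" and y: "y \<in> set (column_word n B j')"
    and jj: "j < j'" and ny: "\<not> x < y"
  have "0 < B x j" "0 < B y j'" using set_column_word_pos x y by auto
  moreover have "y \<le> x" using ny by simp
  ultimately show False using c jj unfolding col_block_diag_def by fastforce
qed

lemma col_block_diag_columns_less:
  assumes c: "col_block_diag B" and x: "x \<in> set (concat (map (column_word n B) [1..<Suc t]))"
    and y: "y \<in> set (concat (map (column_word n B) [Suc t..<Suc m]))"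
  shows "x < y"
proof -
  obtain j where j0: "j \<in> set [1..<Suc t]" "x \<in> set (column_word n B j)" using x by auto
  then have j: "j \<in> {1..t}" "x \<in> set (column_word n B j)" by auto
  obtain j' where j0': "j' \<in> set [Suc t..<Suc m]" "y \<in> set (column_word n B j')" using y by auto
  then have j': "j' \<in> {Suc t..m}" "y \<in> set (column_word n B j')" by auto
  show ?thesis using col_block_diag_column_word_less[OF c j(2) j'(2)] j j' by simp
qed

lemma sorted_rep_word_prefix: "col_block_diag B \<Longrightarrow> sorted (concat (map (column_word n B) [1..<Suc t]))"
proof (induction t)
  case 0 then show ?case by simp
next
  case (Suc t)
  have eq: "concat (map (column_word n B) [1..<Suc (Suc t)]) = concat (map (column_word n B) [1..<Suc t]) @ column_word n B (Suc t)"
    by simp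
  have sep: "\<forall>x\<in>set (concat (map (column_word n B) [1..<Suc t])). \<forall>y\<in>set (column_word n B (Suc t)). x \<le> y"
  proof (intro ballI)
    fix x y assume xx: "x \<in> set (concat (map (column_word n B) [1..<Suc t]))" and yy: "y \<in> set (column_word n B (Suc t))"
    have "x < y" by (rule col_block_diag_columns_less[where m="Suc t", OF Suc.prems xx]) (simp add: yy)
    then show "x \<le> y" by simp
  qed
  have IH: "sorted (concat (map (column_word n B) [1..<Suc t]))" using Suc.IH Suc.prems .
  have sc: "sorted (column_word n B (Suc t))" by (rule sorted_column_word)
  show ?case unfolding eq sorted_append using IH sc sep by blast
qed

lemma sorted_rep_word: "col_block_diag B \<Longrightarrow> sorted (rep_word n B)"
  unfolding rep_word_def by (rule sorted_rep_word_prefix)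

locale bullet_composition =
  fixes n r :: nat and lam :: "nat list"
  assumes lam_bullet: "lam \<in> Lambda_bullet n r"
begin

text \<open>\<open>mu\<close> is \<open>\<lambda>\<close> indexed from 1, the common column sums of the matrices in \<open>\<beta>\<^sup>\<lambda>\<close>;
  \<open>boundaries\<close> \<open>= set(\<lambda>\<^sup>+)\<close> are the ends of the nonempty blocks of \<open>\<lambda>\<close> other than \<open>r\<close>.\<close>

definition mu :: "nat \<Rightarrow> nat" where "mu j = (if j \<in> {1..n} then lam ! (j - 1) else 0)"
definition boundaries :: "nat set" where "boundaries = comp_set (strong lam)"
definition nparts :: nat where "nparts = length (takeWhile (\<lambda>x. x \<noteq> 0) lam)"

lemma length_lam: "length lam = n" and sum_lam: "sum_list lam = r"
  using lam_bullet by (auto simp: Lambda_bullet_def)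

lemma lam_zero_after: "i < j \<Longrightarrow> j < n \<Longrightarrow> lam ! i = 0 \<Longrightarrow> lam ! j = 0"
  using lam_bullet by (auto simp: Lambda_bullet_def)

lemma nparts_le: "nparts \<le> n" unfolding nparts_def using length_takeWhile_le[of _ lam] length_lam by simp

lemma lam_nonzero_before: "j < nparts \<Longrightarrow> lam ! j \<noteq> 0"
proof -
  assume j: "j < nparts"
  then have "takeWhile (\<lambda>x. x \<noteq> 0) lam ! j \<in> set (takeWhile (\<lambda>x. x \<noteq> 0) lam)"
    unfolding nparts_def by (rule nth_mem)
  then have "takeWhile (\<lambda>x. x \<noteq> 0) lam ! j \<noteq> 0" by (blast dest: set_takeWhileD)
  then show ?thesis using takeWhile_nth[of j "\<lambda>x. x \<noteq> 0" lam] j unfolding nparts_def by simp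
qed

lemma lam_zero_from: "nparts \<le> j \<Longrightarrow> j < n \<Longrightarrow> lam ! j = 0"
proof -
  assume j: "nparts \<le> j" "j < n"
  have p0: "lam ! nparts = 0"
  proof -
    have "dropWhile (\<lambda>x. x \<noteq> 0) lam \<noteq> []" using j length_lam nparts_def
      by (metis dropWhile_eq_drop drop_eq_Nil leD le_less_trans)
    then have "hd (dropWhile (\<lambda>x. x \<noteq> 0) lam) = 0" using hd_dropWhile by blast
    moreover have "hd (dropWhile (\<lambda>x. x \<noteq> 0) lam) = lam ! nparts"
      using \<open>dropWhile (\<lambda>x. x \<noteq> 0) lam \<noteq> []\<close> unfolding nparts_def
      by (simp add: dropWhile_eq_drop hd_drop_conv_nth)
    ultimately show ?thesis by simp
  qed
  show ?thesis
  proof (cases "j = nparts")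
    case True then show ?thesis using p0 by simp
  next
    case False then show ?thesis using lam_zero_after[of nparts j] p0 j by simp
  qed
qed

lemma strong_eq_take: "strong lam = take nparts lam"
proof -
  let ?P = "\<lambda>x::nat. x \<noteq> 0"
  have e: "strong lam = filter ?P (takeWhile ?P lam) @ filter ?P (dropWhile ?P lam)"
    unfolding strong_def by (metis filter_append takeWhile_dropWhile_id)
  have d: "filter ?P (dropWhile ?P lam) = []"
  proof -
    have "\<forall>x\<in>set (drop nparts lam). x = 0"
      using lam_zero_from length_lam by (auto simp: in_set_conv_nth)
    then show ?thesis unfolding nparts_def by (simp add: dropWhile_eq_drop filter_empty_conv)
  qed
  have a: "filter ?P (takeWhile ?P lam) = takeWhile ?P lam"
    by (rule filter_True) (auto dest: set_takeWhileD)
  have "strong lam = takeWhile ?P lam" using e d a by simp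
  also have "\<dots> = take nparts lam" unfolding nparts_def by (metis takeWhile_eq_take)
  finally show ?thesis .
qed

lemma length_strong: "length (strong lam) = nparts" using strong_eq_take nparts_le length_lam by simp

lemma psum_mu: "j \<le> n \<Longrightarrow> psum mu j = sum_list (take j lam)"
proof (induction j)
  case 0 then show ?case by simp
next
  case (Suc j)
  then have "j < length lam" using length_lam by simp
  then show ?case using Suc by (simp add: psum_Suc mu_def take_Suc_conv_app_nth)
qed

lemma psum_mu_n: "psum mu n = r" using psum_mu[of n] length_lam sum_lam by simp

lemma boundaries_eq: "boundaries = {psum mu j | j. 1 \<le> j \<and> j < nparts}"
proof -
  have "\<And>j. j < nparts \<Longrightarrow> sum_list (take j (strong lam)) = psum mu j"
    using strong_eq_take psum_mu nparts_le by (simp add: min_def)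
  then show ?thesis unfolding boundaries_def comp_set_def length_strong by (auto simp: length_strong) metis
qed

lemma psum_mu_pos: "1 \<le> j \<Longrightarrow> j \<le> nparts \<Longrightarrow> 0 < psum mu j"
proof -
  assume j: "1 \<le> j" "j \<le> nparts"
  have "0 < mu 1" using lam_nonzero_before[of 0] j nparts_le by (simp add: mu_def)
  moreover have "psum mu 1 \<le> psum mu j" using j by (intro psum_mono)
  ultimately show ?thesis by (simp add: psum_def)
qed

lemma psum_mu_less: "j < nparts \<Longrightarrow> psum mu j < r"
proof -
  assume j: "j < nparts"
  have "0 < mu (Suc j)" using lam_nonzero_before[OF j] j nparts_le by (simp add: mu_def)
  moreover have "psum mu (Suc j) \<le> psum mu n" using j nparts_le by (intro psum_mono) simp
  ultimately show ?thesis using psum_mu_n by (simp add: psum_Suc)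
qed

lemma boundaries_range: "c \<in> boundaries \<Longrightarrow> 1 \<le> c \<and> c < r"
  using boundaries_eq psum_mu_pos psum_mu_less by fastforce

lemma beta_co: "B \<in> beta n r lam \<Longrightarrow> B \<in> Mat n r \<and> co n B = mu"
proof -
  assume B: "B \<in> beta n r lam"
  then have Bm: "B \<in> Mat n r" by (simp add: beta_def)
  have "co n B j = mu j" for j
    using B co_zero[OF Bm, of j] by (auto simp: beta_def mu_def)
  then show ?thesis using Bm by auto
qed

lemma beta_col_block_diag: "B \<in> beta n r lam \<Longrightarrow> col_block_diag B" by (simp add: beta_def)

lemma rep_word_take_drop_less:
  assumes B: "B \<in> beta n r lam" and t: "t \<le> n"
    and x: "x \<in> set (take (psum mu t) (rep_word n B))" and y: "y \<in> set (drop (psum mu t) (rep_word n B))"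
  shows "x < y"
proof -
  have co: "co n B = mu" using beta_co[OF B] by simp
  show ?thesis using x y take_rep_word[OF t, of B] drop_rep_word[OF t, of B] co col_block_diag_columns_less[OF beta_col_block_diag[OF B]]
    by metis
qed

lemma rep_word_beta_words: "B \<in> beta n r lam \<Longrightarrow> rep_word n B \<in> words n r"
  using beta_co rep_word_words by blast

lemma rep_word_boundary_less:
  assumes B: "B \<in> beta n r lam" and c: "c \<in> boundaries"
  shows "rep_word n B ! (c - 1) < rep_word n B ! c"
proof -
  obtain j where j: "c = psum mu j" "1 \<le> j" "j < nparts" using c boundaries_eq by auto
  have cr: "1 \<le> c" "c < r" using boundaries_range[OF c] by auto
  have lr: "length (rep_word n B) = r" using rep_word_beta_words[OF B] by (simp add: length_words)
  have jn: "j \<le> n" using j nparts_le by simp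
  have "rep_word n B ! (c - 1) \<in> set (take c (rep_word n B))" using cr lr by (intro nth_in_set_take) auto
  moreover have "rep_word n B ! c \<in> set (drop c (rep_word n B))" using cr lr by (intro nth_in_set_drop) auto
  ultimately show ?thesis using rep_word_take_drop_less[OF B jn] j by simp
qed

lemma word_matrix_rep_word_beta: "B \<in> beta n r lam \<Longrightarrow> word_matrix n mu (rep_word n B) = B"
  using beta_co word_matrix_rep_word by metis

lemma word_matrix_beta_less:
  assumes A: "A \<in> beta n r lam" and k: "k \<in> words n r" and ck: "word_matrix n mu k = A" and c: "c \<in> boundaries"
    and q: "q < c" "c \<le> q'" "q' < r"
  shows "k ! q < k ! q'"
proof -
  obtain j where j: "c = psum mu j" "1 \<le> j" "j < nparts" using c boundaries_eq by auto
  have jn: "j \<le> n" using j nparts_le by simp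
  have rw: "rep_word n A \<in> words n r" by (rule rep_word_beta_words[OF A])
  have same_matrix: "word_matrix n mu k = word_matrix n mu (rep_word n A)" using ck word_matrix_rep_word_beta[OF A] by simp
  have m1: "mset (take c k) = mset (take c (rep_word n A))" using word_matrix_mset_take[OF k rw same_matrix jn] j by simp
  have m2: "mset k = mset (rep_word n A)"
    using word_matrix_mset_take[OF k rw same_matrix order_refl] psum_mu_n k rw by (simp add: length_words)
  have m3: "mset (drop c k) = mset (drop c (rep_word n A))"
  proof -
    have "mset k = mset (take c k) + mset (drop c k)" by (metis append_take_drop_id mset_append)
    moreover have "mset (rep_word n A) = mset (take c (rep_word n A)) + mset (drop c (rep_word n A))"
      by (metis append_take_drop_id mset_append)
    ultimately show ?thesis using m1 m2 by simp
  qed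
  have lk: "length k = r" using k by (simp add: length_words)
  have "k ! q \<in> set (take c k)" using q lk by (intro nth_in_set_take) auto
  then have x: "k ! q \<in> set (take c (rep_word n A))" using arg_cong[OF m1, of set_mset] by simp
  have "k ! q' \<in> set (drop c k)" using q lk by (intro nth_in_set_drop) auto
  then have y: "k ! q' \<in> set (drop c (rep_word n A))" using arg_cong[OF m3, of set_mset] by simp
  show ?thesis using rep_word_take_drop_less[OF A jn] x y j by simp
qed

end

section \<open>Signed permutations within segments\<close>

text \<open>\<open>sign_class Ks s k\<close>: \<open>k\<close> arises from \<open>s\<close> by permuting the letters inside each maximal segment
  of positions whose interior cuts all lie in \<open>Ks\<close>.  When \<open>s\<close> is sorted and strictly increasing
  across \<open>Ks\<close>, these letters are distinct and \<open>sign_coeff\<close> is the sign of the permutation.\<close>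

definition sign_class :: "nat set \<Rightarrow> nat list \<Rightarrow> nat list \<Rightarrow> bool" where
  "sign_class Ks s k \<longleftrightarrow> length k = length s \<and>
     (\<forall>c. c \<le> length s \<longrightarrow> c \<notin> Ks \<longrightarrow> mset (take c k) = mset (take c s)) \<and>
     (\<forall>p q. p < q \<longrightarrow> q < length s \<longrightarrow> (\<forall>t. p < t \<and> t \<le> q \<longrightarrow> t \<in> Ks) \<longrightarrow> k ! p \<noteq> k ! q)"

definition sign_coeff :: "nat set \<Rightarrow> nat list \<Rightarrow> nat list \<Rightarrow> complex" where
  "sign_coeff Ks s k = (if sign_class Ks s k then (-1) ^ inversions k else 0)"

locale strict_boundaries =
  fixes Ks :: "nat set" and s :: "nat list"
  assumes s_sorted: "sorted s"
    and s_strict: "\<And>i. i \<in> Ks \<Longrightarrow> 1 \<le> i \<and> i < length s \<and> s ! (i - 1) < s ! i"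
begin

lemma strict_run: "(\<forall>t. p < t \<and> t \<le> q \<longrightarrow> t \<in> Ks) \<Longrightarrow> p < q \<Longrightarrow> s ! p < s ! q"
proof (induction q)
  case 0 then show ?case by simp
next
  case (Suc q)
  have "Suc q \<in> Ks" using Suc.prems by auto
  then have st: "s ! q < s ! Suc q" using s_strict[of "Suc q"] by simp
  show ?case
  proof (cases "p = q")
    case True then show ?thesis using st by simp
  next
    case False
    then have "s ! p < s ! q" using Suc by auto
    then show ?thesis using st by simp
  qed
qed

lemma sign_class_self: "sign_class Ks s s"
  unfolding sign_class_def using strict_run by (metis less_irrefl)

lemma sign_class_mset: "sign_class Ks s k \<Longrightarrow> mset k = mset s"
proof -
  assume k: "sign_class Ks s k"
  have "length s \<notin> Ks" using s_strict by fastforce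
  then have "mset (take (length s) k) = mset (take (length s) s)" using k unfolding sign_class_def by blast
  then show ?thesis using k unfolding sign_class_def by simp
qed

lemma sign_class_boundary: "sign_class Ks s k \<Longrightarrow> i \<in> Ks \<Longrightarrow> k ! (i - 1) \<noteq> k ! i"
proof -
  assume k: "sign_class Ks s k" and i: "i \<in> Ks"
  have i1: "1 \<le> i" "i < length s" using s_strict[OF i] by auto
  have r: "\<forall>t. i - 1 < t \<and> t \<le> i \<longrightarrow> t \<in> Ks"
  proof (intro allI impI)
    fix t assume "i - 1 < t \<and> t \<le> i"
    then have "t = i" using i1 by auto
    then show "t \<in> Ks" using i by simp
  qed
  have "i - 1 < i" using i1 by simp
  then show ?thesis using k i1 r unfolding sign_class_def by blast
qed

lemma s_take_drop_le: "x \<in> set (take c s) \<Longrightarrow> y \<in> set (drop c s) \<Longrightarrow> x \<le> y"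
  using s_sorted sorted_append[of "take c s" "drop c s"] by simp

lemma sign_class_inner: "sign_class Ks s k \<Longrightarrow> 1 \<le> i \<Longrightarrow> i < length s \<Longrightarrow> i \<notin> Ks \<Longrightarrow> k ! (i - 1) \<le> k ! i"
proof -
  assume k: "sign_class Ks s k" and i: "1 \<le> i" "i < length s" "i \<notin> Ks"
  have lk: "length k = length s" using k by (simp add: sign_class_def)
  have m1: "mset (take i k) = mset (take i s)" using k i unfolding sign_class_def by simp
  have m2: "mset k = mset s" using sign_class_mset[OF k] .
  have m3: "mset (drop i k) = mset (drop i s)"
  proof -
    have "mset k = mset (take i k) + mset (drop i k)" by (metis append_take_drop_id mset_append)
    moreover have "mset s = mset (take i s) + mset (drop i s)" by (metis append_take_drop_id mset_append)
    ultimately show ?thesis using m1 m2 by simp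
  qed
  have "k ! (i - 1) \<in> set (take i k)" using i lk by (intro nth_in_set_take) auto
  then have x: "k ! (i - 1) \<in> set (take i s)" using arg_cong[OF m1, of set_mset] by simp
  have "k ! i \<in> set (drop i k)" using i lk by (intro nth_in_set_drop) auto
  then have y: "k ! i \<in> set (drop i s)" using arg_cong[OF m3, of set_mset] by simp
  show ?thesis using s_take_drop_le[OF x y] .
qed

lemma sign_class_eqI: "sign_class Ks s k \<Longrightarrow> (\<forall>c\<in>Ks. mset (take c k) = mset (take c s)) \<Longrightarrow> k = s"
proof -
  assume k: "sign_class Ks s k" and c: "\<forall>c\<in>Ks. mset (take c k) = mset (take c s)"
  have lk: "length k = length s" using k by (simp add: sign_class_def)
  have all: "mset (take c k) = mset (take c s)" if "c \<le> length s" for c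
    using k c that unfolding sign_class_def by (cases "c \<in> Ks") auto
  show ?thesis
  proof (rule nth_equalityI)
    show "length k = length s" by (rule lk)
  next
    fix q assume q: "q < length k"
    have "mset (take (Suc q) k) = mset (take q k) + {#k ! q#}" using q by (simp add: take_Suc_conv_app_nth)
    moreover have "mset (take (Suc q) s) = mset (take q s) + {#s ! q#}" using q lk by (simp add: take_Suc_conv_app_nth)
    ultimately show "k ! q = s ! q" using all[of q] all[of "Suc q"] q lk by simp
  qed
qed

lemma sign_class_adj_swap: assumes k: "sign_class Ks s k" and i: "i \<in> Ks" shows "sign_class Ks s (adj_swap i k)"
proof -
  have i1: "1 \<le> i" "i < length s" using s_strict[OF i] by auto
  have lk: "length k = length s" using k by (simp add: sign_class_def)
  let ?tau = "\<lambda>x. if x = i - 1 then i else if x = i then i - 1 else x"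
  have nth: "adj_swap i k ! x = k ! ?tau x" if "x < length s" for x using that i1 lk by (simp add: nth_adj_swap)
  have P1: "\<forall>c. c \<le> length s \<longrightarrow> c \<notin> Ks \<longrightarrow> mset (take c (adj_swap i k)) = mset (take c s)"
  proof (intro allI impI)
    fix c assume c: "c \<le> length s" "c \<notin> Ks"
    then have "c \<noteq> i" using i by auto
    then have "mset (take c (adj_swap i k)) = mset (take c k)" using i1 lk by (intro mset_take_adj_swap) auto
    then show "mset (take c (adj_swap i k)) = mset (take c s)" using k c unfolding sign_class_def by simp
  qed
  have P2: "adj_swap i k ! p \<noteq> adj_swap i k ! q" if pq: "p < q" "q < length s" "\<forall>t. p < t \<and> t \<le> q \<longrightarrow> t \<in> Ks" for p q
  proof -
    let ?a = "min (?tau p) (?tau q)" and ?b = "max (?tau p) (?tau q)"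
    have ab: "?a < ?b" using pq i1 by auto
    have bl: "?b < length s" using pq i1 by auto
    have run: "\<forall>t. ?a < t \<and> t \<le> ?b \<longrightarrow> t \<in> Ks"
    proof (intro allI impI)
      fix t assume t: "?a < t \<and> t \<le> ?b"
      then have "(p < t \<and> t \<le> q) \<or> t = i" using pq i1 by (auto split: if_splits)
      then show "t \<in> Ks" using pq i by auto
    qed
    have "k ! ?a \<noteq> k ! ?b" using k ab bl run unfolding sign_class_def by blast
    then have "k ! ?tau p \<noteq> k ! ?tau q" by (metis max_def min_def)
    then show ?thesis using nth pq by simp
  qed
  show ?thesis unfolding sign_class_def using lk P1 P2 by simp
qed

lemma sign_class_adj_swap_iff: "i \<in> Ks \<Longrightarrow> length k = length s \<Longrightarrow> sign_class Ks s (adj_swap i k) \<longleftrightarrow> sign_class Ks s k"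
  using sign_class_adj_swap s_strict adj_swap_adj_swap by metis

lemma sign_coeff_self: "sign_coeff Ks s s = 1" using sign_class_self inversions_sorted[OF s_sorted] by (simp add: sign_coeff_def)

lemma sign_coeff_pi:
  assumes lk: "length k = length s" and i: "1 \<le> i" "i < length s"
  shows "(if k ! (i - 1) < k ! i then sign_coeff Ks s (adj_swap i k) else if k ! (i - 1) = k ! i then 0 else - sign_coeff Ks s k)
     = (if i \<in> Ks then -1 else 0) * sign_coeff Ks s k"
proof (cases "i \<in> Ks")
  case True
  consider "k ! (i - 1) < k ! i" | "k ! (i - 1) = k ! i" | "k ! i < k ! (i - 1)" by linarith
  then show ?thesis
  proof cases
    case 1
    have "sign_coeff Ks s (adj_swap i k) = - sign_coeff Ks s k"
      using sign_class_adj_swap_iff[OF True lk] inversions_adj_swap_asc[of i k] 1 i lk by (simp add: sign_coeff_def)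
    then show ?thesis using 1 True by simp
  next
    case 2
    then have "\<not> sign_class Ks s k" using sign_class_boundary True by auto
    then show ?thesis using 2 True by (simp add: sign_coeff_def)
  next
    case 3 then show ?thesis using True by simp
  qed
next
  case False
  consider "k ! (i - 1) < k ! i" | "k ! (i - 1) = k ! i" | "k ! i < k ! (i - 1)" by linarith
  then show ?thesis
  proof cases
    case 1
    have "\<not> sign_class Ks s (adj_swap i k)"
    proof
      assume "sign_class Ks s (adj_swap i k)"
      then have "adj_swap i k ! (i - 1) \<le> adj_swap i k ! i" using sign_class_inner i False by blast
      then show False using 1 i lk by simp
    qed
    then show ?thesis using 1 False by (simp add: sign_coeff_def)
  next
    case 2 then show ?thesis using False by simp
  next
    case 3
    have "\<not> sign_class Ks s k" using sign_class_inner[of k i] i False 3 by auto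
    then show ?thesis using 3 False by (simp add: sign_coeff_def)
  qed
qed

end

lemma in_W_zero: "in_W n r alpha (\<lambda>_. 0)"
  unfolding in_W_def by (rule exI[of _ "\<lambda>_. 0"]) simp

lemma in_W_add: "in_W n r alpha x \<Longrightarrow> in_W n r alpha y \<Longrightarrow> in_W n r alpha (\<lambda>l. x l + y l)"
proof -
  assume "in_W n r alpha x" "in_W n r alpha y"
  then obtain c d where c: "\<forall>l. x l = (\<Sum>p\<in>{1..<r} \<times> words n r. c p * relvec alpha (fst p) (snd p) l)"
    and d: "\<forall>l. y l = (\<Sum>p\<in>{1..<r} \<times> words n r. d p * relvec alpha (fst p) (snd p) l)"
    unfolding in_W_def by blast
  show ?thesis unfolding in_W_def
    by (rule exI[of _ "\<lambda>p. c p + d p"]) (simp add: c d sum.distrib algebra_simps)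
qed

lemma in_W_scale: "in_W n r alpha x \<Longrightarrow> in_W n r alpha (\<lambda>l. a * x l)"
proof -
  assume "in_W n r alpha x"
  then obtain c where c: "\<forall>l. x l = (\<Sum>p\<in>{1..<r} \<times> words n r. c p * relvec alpha (fst p) (snd p) l)"
    unfolding in_W_def by blast
  show ?thesis unfolding in_W_def
    by (rule exI[of _ "\<lambda>p. a * c p"]) (simp add: c sum_distrib_left algebra_simps)
qed

lemma in_W_sum: "finite S \<Longrightarrow> (\<And>s. s \<in> S \<Longrightarrow> in_W n r alpha (f s)) \<Longrightarrow> in_W n r alpha (\<lambda>l. \<Sum>s\<in>S. f s l)"
proof (induction S rule: finite_induct)
  case empty then show ?case by (simp add: in_W_zero)
next
  case (insert a S)
  then show ?case using in_W_add[of n r alpha "f a" "\<lambda>l. \<Sum>s\<in>S. f s l"] by simp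
qed

lemma in_W_relvec: "i \<in> {1..<r} \<Longrightarrow> m \<in> words n r \<Longrightarrow> in_W n r alpha (relvec alpha i m)"
  unfolding in_W_def
proof (intro exI allI)
  fix l assume a: "i \<in> {1..<r}" "m \<in> words n r"
  have "(\<Sum>p\<in>{1..<r} \<times> words n r. (if p = (i, m) then 1 else 0) * relvec alpha (fst p) (snd p) l) =
     (\<Sum>p\<in>{1..<r} \<times> words n r. if p = (i, m) then relvec alpha (fst p) (snd p) l else 0)"
    by (rule sum.cong) auto
  also have "\<dots> = relvec alpha i m l" using a by (simp add: sum.delta')
  finally show "relvec alpha i m l = (\<Sum>p\<in>{1..<r} \<times> words n r. (if p = (i, m) then 1 else 0) * relvec alpha (fst p) (snd p) l)" by simp
qed

lemma in_W_cong: "in_W n r alpha x \<Longrightarrow> (\<And>l. x l = y l) \<Longrightarrow> in_W n r alpha y"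
proof -
  assume "in_W n r alpha x" "\<And>l. x l = y l"
  then have "x = y" by auto
  then show ?thesis using \<open>in_W n r alpha x\<close> by simp
qed

lemma relvec_eq_pi_act: "m \<in> words n r \<Longrightarrow> 1 \<le> i \<Longrightarrow> i < r \<Longrightarrow>
  relvec alpha i m = (\<lambda>l. pi_act i (single m) l - chi alpha i * single m l)"
proof -
  assume a: "m \<in> words n r" "1 \<le> i" "i < r"
  have "\<And>l. Pi i l m = pi_act i (single m) l"
  proof -
    fix l
    have sm: "supported n r (single m)" using a by (simp add: supported_def single_def)
    have "(\<Sum>m'\<in>words n r. Pi i l m' * single m m') = Pi i l m"
      using a by (simp add: single_def if_distrib sum.delta' cong: if_cong)
    then show "Pi i l m = pi_act i (single m) l" using Pi_mult_sum[OF sm a(2,3), of l] by simp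
  qed
  then show ?thesis unfolding relvec_def by auto
qed

lemma sum_single: "m \<in> words n r \<Longrightarrow> (\<Sum>k\<in>words n r. f k * single m k) = f m"
  by (simp add: single_def if_distrib cong: if_cong)

lemma vec_expand: "supported n r z \<Longrightarrow> z l = (\<Sum>m\<in>words n r. z m * single m l)"
proof -
  assume z: "supported n r z"
  show ?thesis
  proof (cases "l \<in> words n r")
    case True
    have "(\<Sum>m\<in>words n r. z m * single m l) = (\<Sum>m\<in>words n r. if m = l then z m else 0)"
      by (rule sum.cong) (auto simp: single_def)
    then show ?thesis using True by simp
  next
    case False
    then have "(\<Sum>m\<in>words n r. z m * single m l) = 0" by (auto simp: single_def intro!: sum.neutral)
    then show ?thesis using z False by (simp add: supported_def)
  qed
qed

lemma sum_bilinear_swap: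
  fixes f :: "'a \<Rightarrow> 'c::comm_semiring_0"
  shows "(\<Sum>l\<in>S. f l * (\<Sum>m\<in>T. M l m * z m)) = (\<Sum>m\<in>T. z m * (\<Sum>l\<in>S. f l * M l m))"
proof -
  have "(\<Sum>l\<in>S. f l * (\<Sum>m\<in>T. M l m * z m)) = (\<Sum>l\<in>S. \<Sum>m\<in>T. z m * (f l * M l m))"
    by (simp add: sum_distrib_left mult_ac)
  also have "\<dots> = (\<Sum>m\<in>T. \<Sum>l\<in>S. z m * (f l * M l m))" by (rule sum.swap)
  finally show ?thesis by (simp add: sum_distrib_left)
qed

lemma sum_rhov_swap:
  "(\<Sum>l\<in>words n r. f l * rhov n r g z l) = (\<Sum>k\<in>words n r. (\<Sum>l\<in>words n r. f l * rho g l k) * z k)"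
  unfolding rhov_def by (subst sum_bilinear_swap) (rule sum.cong[OF refl], rule mult.commute)

lemma functional_vanishes_on_W:
  assumes rel: "\<And>i m. i \<in> {1..<r} \<Longrightarrow> m \<in> words n r \<Longrightarrow> (\<Sum>k\<in>words n r. f k * relvec alpha i m k) = 0"
    and x: "in_W n r alpha x"
  shows "(\<Sum>k\<in>words n r. f k * x k) = 0"
proof -
  obtain c where c: "\<And>l. x l = (\<Sum>p\<in>{1..<r} \<times> words n r. c p * relvec alpha (fst p) (snd p) l)"
    using x unfolding in_W_def by blast
  have "(\<Sum>k\<in>words n r. f k * x k) =
      (\<Sum>p\<in>{1..<r} \<times> words n r. c p * (\<Sum>k\<in>words n r. f k * relvec alpha (fst p) (snd p) k))"
    unfolding c by (subst sum_bilinear_swap[symmetric]) (simp add: mult.commute)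
  also have "\<dots> = 0" using rel by (auto intro!: sum.neutral)
  finally show ?thesis .
qed

lemma finite_beta[simp]: "finite (beta n r lam)"
  by (rule finite_subset[OF _ finite_Mat[of n r]]) (auto simp: beta_def)

section \<open>The sign functionals\<close>

context bullet_composition
begin

text \<open>\<open>Phi B k\<close> is the coefficient of \<open>[e\<^sub>B]\<close> in the image of \<open>v\<^sub>k\<close> under the isomorphism.\<close>

definition Phi :: "(nat \<Rightarrow> nat \<Rightarrow> nat) \<Rightarrow> nat list \<Rightarrow> complex" where
  "Phi B k = sign_coeff boundaries (rep_word n B) k"

lemma strict_boundaries_rep_word: "B \<in> beta n r lam \<Longrightarrow> strict_boundaries boundaries (rep_word n B)"
proof
  assume B: "B \<in> beta n r lam"
  have lr: "length (rep_word n B) = r" using rep_word_beta_words[OF B] by (simp add: length_words)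
  show "sorted (rep_word n B)" using sorted_rep_word[OF beta_col_block_diag[OF B]] .
  fix i assume i: "i \<in> boundaries"
  show "1 \<le> i \<and> i < length (rep_word n B) \<and> rep_word n B ! (i - 1) < rep_word n B ! i"
    using boundaries_range[OF i] lr rep_word_boundary_less[OF B i] by simp
qed

lemma chi_strong: "chi (strong lam) i = (if i \<in> boundaries then -1 else 0)"
  by (simp add: chi_def boundaries_def)

lemma Phi_nonzero: "B \<in> beta n r lam \<Longrightarrow> Phi B k \<noteq> 0 \<Longrightarrow> sign_class boundaries (rep_word n B) k"
  by (simp add: Phi_def sign_coeff_def split: if_splits)

lemma beta_rep_word_inj: "B \<in> beta n r lam \<Longrightarrow> B' \<in> beta n r lam \<Longrightarrow> mset (rep_word n B) = mset (rep_word n B') \<Longrightarrow> B = B'"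
  using sorted_mset_unique[OF sorted_rep_word[OF beta_col_block_diag] sorted_rep_word[OF beta_col_block_diag]] word_matrix_rep_word_beta by metis

lemma Phi_rep_word: "B \<in> beta n r lam \<Longrightarrow> B' \<in> beta n r lam \<Longrightarrow> Phi B (rep_word n B') = (if B = B' then 1 else 0)"
proof -
  assume B: "B \<in> beta n r lam" and B': "B' \<in> beta n r lam"
  interpret strict_boundaries boundaries "rep_word n B" by (rule strict_boundaries_rep_word[OF B])
  show ?thesis
  proof (cases "B = B'")
    case True then show ?thesis using sign_coeff_self by (simp add: Phi_def)
  next
    case False
    have "\<not> sign_class boundaries (rep_word n B) (rep_word n B')"
    proof
      assume "sign_class boundaries (rep_word n B) (rep_word n B')"
      then have "mset (rep_word n B') = mset (rep_word n B)" using sign_class_mset by simp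
      then show False using beta_rep_word_inj[OF B' B] False by simp
    qed
    then show ?thesis using False by (simp add: Phi_def sign_coeff_def)
  qed
qed

lemma Phi_Pi:
  assumes B: "B \<in> beta n r lam" and m: "m \<in> words n r" and i: "1 \<le> i" "i < r"
  shows "(\<Sum>l\<in>words n r. Phi B l * Pi i l m) = chi (strong lam) i * Phi B m"
proof -
  interpret strict_boundaries boundaries "rep_word n B" by (rule strict_boundaries_rep_word[OF B])
  have lr: "length (rep_word n B) = r" using rep_word_beta_words[OF B] by (simp add: length_words)
  have lm: "length m = r" using m by (simp add: length_words)
  have "(\<Sum>l\<in>words n r. Phi B l * Pi i l m) =
     (if m ! (i - 1) < m ! i then Phi B (adj_swap i m) else if m ! (i - 1) = m ! i then 0 else - Phi B m)"
    using sum_mult_Pi[OF m i, of "Phi B"] by simp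
  also have "\<dots> = chi (strong lam) i * Phi B m"
    using sign_coeff_pi[of m i] lr lm i unfolding Phi_def chi_strong by simp
  finally show ?thesis .
qed

lemma Phi_pi_act:
  assumes B: "B \<in> beta n r lam" and z: "supported n r z" and i: "1 \<le> i" "i < r"
  shows "(\<Sum>l\<in>words n r. Phi B l * (pi_act i z l - chi (strong lam) i * z l)) = 0"
proof -
  have "(\<Sum>l\<in>words n r. Phi B l * pi_act i z l) = (\<Sum>l\<in>words n r. Phi B l * (\<Sum>m\<in>words n r. Pi i l m * z m))"
    using Pi_mult_sum[OF z i] by simp
  also have "\<dots> = (\<Sum>m\<in>words n r. z m * (\<Sum>l\<in>words n r. Phi B l * Pi i l m))"
    by (rule sum_bilinear_swap)
  also have "\<dots> = (\<Sum>l\<in>words n r. Phi B l * (chi (strong lam) i * z l))"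
    using Phi_Pi[OF B _ i] by (simp add: algebra_simps)
  finally show ?thesis by (simp add: right_diff_distrib sum_subtractf)
qed

lemma Phi_relvec:
  assumes B: "B \<in> beta n r lam" and m: "m \<in> words n r" and i: "1 \<le> i" "i < r"
  shows "(\<Sum>l\<in>words n r. Phi B l * relvec (strong lam) i m l) = 0"
proof -
  have sm: "supported n r (single m)" using m by (simp add: supported_def single_def)
  show ?thesis using Phi_pi_act[OF B sm i] relvec_eq_pi_act[OF m i, of "strong lam"] by simp
qed

lemma yA_beta: "A \<in> beta n r lam \<Longrightarrow> yA n r A m = (if m \<in> words n r \<and> word_matrix n mu m = A then 1 else 0)"
  using yA_word_matrix[of A n r m] beta_co[of A] by simp

lemma word_matrix_beta_mset_take: "A \<in> beta n r lam \<Longrightarrow> m \<in> words n r \<Longrightarrow> word_matrix n mu m = A \<Longrightarrow> t \<le> n \<Longrightarrow>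
  mset (take (psum mu t) m) = mset (take (psum mu t) (rep_word n A))"
  using word_matrix_mset_take[OF _ rep_word_beta_words] word_matrix_rep_word_beta by metis

lemma word_matrix_sign_class_rep:
  assumes A: "A \<in> beta n r lam" and m: "m \<in> words n r" and cm: "word_matrix n mu m = A"
    and R: "sign_class boundaries (rep_word n A) m"
  shows "m = rep_word n A"
proof -
  interpret strict_boundaries boundaries "rep_word n A" by (rule strict_boundaries_rep_word[OF A])
  have "\<forall>c\<in>boundaries. mset (take c m) = mset (take c (rep_word n A))"
  proof
    fix c assume c: "c \<in> boundaries"
    obtain j where j: "c = psum mu j" "1 \<le> j" "j < nparts" using c boundaries_eq by auto
    show "mset (take c m) = mset (take c (rep_word n A))" using word_matrix_beta_mset_take[OF A m cm, of j] j nparts_le by simp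
  qed
  then show ?thesis using sign_class_eqI[OF R] by simp
qed

lemma yA_Phi:
  assumes A: "A \<in> beta n r lam" and B: "B \<in> beta n r lam" and m: "m \<in> words n r"
  shows "yA n r A m * Phi B m = (if m = rep_word n A \<and> B = A then 1 else 0)"
proof -
  have yrep: "yA n r A (rep_word n A) = 1" using yA_beta[OF A] rep_word_beta_words[OF A] word_matrix_rep_word_beta[OF A] by simp
  have prep: "Phi A (rep_word n A) = 1" using Phi_rep_word[OF A A] by simp
  show ?thesis
  proof (cases "yA n r A m = 0 \<or> Phi B m = 0")
    case True
    then show ?thesis using yrep prep by auto
  next
    case False
    then have cm: "word_matrix n mu m = A" and R: "sign_class boundaries (rep_word n B) m"
      using yA_beta[OF A, of m] Phi_nonzero[OF B] by (auto split: if_splits)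
    have m1: "mset m = mset (rep_word n B)" using strict_boundaries.sign_class_mset[OF strict_boundaries_rep_word[OF B] R] .
    have m2: "mset m = mset (rep_word n A)"
      using word_matrix_beta_mset_take[OF A m cm order_refl] psum_mu_n m rep_word_beta_words[OF A] by (simp add: length_words)
    have BA: "B = A" using beta_rep_word_inj[OF B A] m1 m2 by simp
    have "m = rep_word n A" using word_matrix_sign_class_rep[OF A m cm] R BA by simp
    then show ?thesis using BA yrep prep by simp
  qed
qed

text \<open>Applying a generator to \<open>y\<^sub>A\<close> keeps letters on the two sides of each boundary ordered, which
  within a sign class forces the representative word.\<close>

lemma Phi_rhov_yA_support:
  assumes A: "A \<in> beta n r lam" and B: "B \<in> beta n r lam" and g: "g \<in> gens n"
    and l: "l \<in> words n r" and Phi: "Phi B l \<noteq> 0" and rho: "rhov n r g (yA n r A) l \<noteq> 0"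
  shows "l = rep_word n B"
proof -
  interpret strict_boundaries boundaries "rep_word n B" by (rule strict_boundaries_rep_word[OF B])
  have R: "sign_class boundaries (rep_word n B) l" using Phi_nonzero[OF B Phi] .
  obtain k where k: "k \<in> words n r" "rho g l k * yA n r A k \<noteq> 0"
    using rho unfolding rhov_def by (meson sum.not_neutral_contains_not_neutral)
  have ck: "word_matrix n mu k = A" using k yA_beta[OF A, of k] by (auto split: if_splits)
  have lk: "length k = r" "length l = r" using k l by (auto simp: length_words)
  have "mset (take c l) = mset (take c (rep_word n B))" if c: "c \<in> boundaries" for c
  proof -
    have "l ! q \<le> l ! q'" if "q < c" "c \<le> q'" "q' < length l" for q q'
      using gen_act_nonzero_le[of g k l q q'] k word_matrix_beta_less[OF A k(1) ck c] that lk
      by (simp add: rho_gen_act)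
    moreover have "sort l = rep_word n B"
      using properties_for_sort[OF sign_class_mset[OF R, symmetric] s_sorted] .
    ultimately show ?thesis using mset_take_eq_sort[of c l] by simp
  qed
  then show ?thesis using sign_class_eqI[OF R] by simp
qed

section \<open>Straightening modulo \<open>W\<close>\<close>

lemma col_block_diag_word_matrix_sorted:
  assumes k: "k \<in> words n r" and s: "sorted k" and st: "\<forall>c\<in>boundaries. k ! (c - 1) < k ! c"
  shows "col_block_diag (word_matrix n mu k)"
  unfolding col_block_diag_def
proof (intro allI impI)
  let ?C = "word_matrix n mu k"
  have lk: "length k = r" using k by (simp add: length_words)
  fix i j i' s' assume pos: "0 < ?C i j" and iss: "i' \<le> i \<and> j < s'"
  show "?C i' s' = 0"
  proof (rule ccontr)
    assume "?C i' s' \<noteq> 0"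
    then have ij: "i \<in> {1..n}" "j \<in> {1..n}" "i \<in> set (block mu j k)" and
        iss': "i' \<in> {1..n}" "s' \<in> {1..n}" "i' \<in> set (block mu s' k)"
      using pos unfolding word_matrix_def by (auto split: if_splits simp: count_mset_0_iff[symmetric])
    obtain e where e: "e < mu j" "psum mu (j - 1) + e < length k" "i = k ! (psum mu (j - 1) + e)"
      using in_block_nth[OF ij(3)] ij by auto
    obtain e' where e': "e' < mu s'" "psum mu (s' - 1) + e' < length k" "i' = k ! (psum mu (s' - 1) + e')"
      using in_block_nth[OF iss'(3)] iss' by auto
    let ?p = "psum mu (j - 1) + e" and ?q = "psum mu (s' - 1) + e'" and ?c = "psum mu j"
    have pc: "?p < ?c" using psum_Suc[of mu "j - 1"] ij e by simp
    have "j \<le> s' - 1" using iss by linarith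
    then have cq: "?c \<le> ?q" using psum_mono[of j "s' - 1" mu] by simp
    have "s' - 1 < nparts"
    proof (rule ccontr)
      assume "\<not> s' - 1 < nparts"
      moreover have "s' - 1 < n" using iss' by auto
      ultimately have "lam ! (s' - 1) = 0" using lam_zero_from by simp
      then show False using e' iss' by (simp add: mu_def)
    qed
    then have cK: "?c \<in> boundaries" unfolding boundaries_eq using ij iss by auto
    have c1: "1 \<le> ?c" "?c < r" using boundaries_range[OF cK] by auto
    have "k ! ?p \<le> k ! (?c - 1)" using s pc c1 lk by (intro sorted_nth_mono) auto
    also have "\<dots> < k ! ?c" using st cK by simp
    also have "\<dots> \<le> k ! ?q" using s cq e' lk by (intro sorted_nth_mono) auto
    finally have "i < i'" using e e' by simp
    then show False using iss by simp
  qed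
qed

lemma word_matrix_sorted_beta:
  assumes k: "k \<in> words n r" and s: "sorted k" and st: "\<forall>c\<in>boundaries. k ! (c - 1) < k ! c"
  shows "word_matrix n mu k \<in> beta n r lam"
  using word_matrix_Mat[OF k psum_mu_n] col_block_diag_word_matrix_sorted[OF assms]
  by (simp add: beta_def mu_def)

lemma rep_word_word_matrix_sorted:
  assumes k: "k \<in> words n r" and s: "sorted k" and st: "\<forall>c\<in>boundaries. k ! (c - 1) < k ! c"
  shows "rep_word n (word_matrix n mu k) = k"
proof -
  let ?B = "word_matrix n mu k"
  have B: "?B \<in> beta n r lam" using word_matrix_sorted_beta[OF assms] .
  have "mset (take (psum mu n) (rep_word n ?B)) = mset (take (psum mu n) k)"
    using word_matrix_mset_take[OF rep_word_beta_words[OF B] k word_matrix_rep_word_beta[OF B] order_refl] .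
  then have "mset (rep_word n ?B) = mset k"
    using psum_mu_n k rep_word_beta_words[OF B] by (simp add: length_words)
  then show ?thesis using sorted_mset_unique[OF sorted_rep_word[OF beta_col_block_diag[OF B]] s] by simp
qed

lemma Phi_plateau:
  assumes B: "B \<in> beta n r lam" and c: "c \<in> boundaries" and eq: "k ! (c - 1) = k ! c"
  shows "Phi B k = 0"
  using Phi_nonzero[OF B] strict_boundaries.sign_class_boundary[OF strict_boundaries_rep_word[OF B] _ c] eq
  by blast

lemma Phi_descent:
  assumes B: "B \<in> beta n r lam" and k: "k \<in> words n r"
    and j: "1 \<le> j" "j < r" and desc: "k ! j < k ! (j - 1)"
  shows "Phi B k = chi (strong lam) j * Phi B (adj_swap j k)"
proof -
  have lk: "length k = r" using k by (simp add: length_words)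
  have k': "adj_swap j k \<in> words n r" using adj_swap_words j k by blast
  have "(\<Sum>l\<in>words n r. Phi B l * Pi j l (adj_swap j k)) = Phi B k"
    using sum_mult_Pi[OF k' j, of "Phi B"] desc lk j by simp
  then show ?thesis using Phi_Pi[OF B k' j] by simp
qed

definition straighten :: "nat list \<Rightarrow> vec" where
  "straighten k = (\<lambda>l. \<Sum>B\<in>beta n r lam. Phi B k * single (rep_word n B) l)"

text \<open>Straightening: sorting \<open>k\<close> with the relations \<open>v\<^sub>k \<cdot> pibar\<^sub>j \<equiv> chi(pibar\<^sub>j) v\<^sub>k\<close> ends in a
  representative word or in a word with a repeated letter across a boundary, which lies in \<open>W\<close>.\<close>

lemma single_mod_W: "k \<in> words n r \<Longrightarrow> in_W n r (strong lam) (\<lambda>l. single k l - straighten k l)"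
proof (induction "inversions k" arbitrary: k rule: less_induct)
  case less
  have lk: "length k = r" using less.prems by (simp add: length_words)
  consider (rep) "sorted k" "\<forall>c\<in>boundaries. k ! (c - 1) < k ! c"
    | (plateau) c where "c \<in> boundaries" "k ! (c - 1) = k ! c"
    | (descent) "\<not> sorted k"
    using sorted_adjacent_le[of k] boundaries_range lk by (metis le_neq_implies_less)
  then show ?case
  proof cases
    case rep
    let ?B0 = "word_matrix n mu k"
    have B0: "?B0 \<in> beta n r lam" and rB0: "rep_word n ?B0 = k"
      using word_matrix_sorted_beta[OF less.prems rep] rep_word_word_matrix_sorted[OF less.prems rep] .
    have "straighten k l = single k l" for l
    proof -
      have "straighten k l = (\<Sum>B\<in>beta n r lam. if B = ?B0 then single k l else 0)"
        unfolding straighten_def using Phi_rep_word[OF _ B0] rB0 by (intro sum.cong) auto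
      then show ?thesis using B0 by simp
    qed
    then show ?thesis using in_W_zero by simp
  next
    case (plateau c)
    have "relvec (strong lam) c k = single k"
      using plateau by (simp add: fun_eq_iff relvec_def Pi_def Let_def chi_strong)
    then have "in_W n r (strong lam) (single k)"
      using in_W_relvec[of c r k n "strong lam"] boundaries_range[OF plateau(1)] less.prems by simp
    moreover have "straighten k = (\<lambda>_. 0)"
      using Phi_plateau[OF _ plateau] by (simp add: straighten_def fun_eq_iff)
    ultimately show ?thesis by simp
  next
    case descent
    define j where "j = first_descent k"
    have j: "1 \<le> j" "j < r" "k ! j < k ! (j - 1)" using first_descent_is_descent[OF descent] lk unfolding j_def by auto
    let ?k' = "adj_swap j k"
    have k': "?k' \<in> words n r" using adj_swap_words j less.prems by blast
    have "inversions ?k' < inversions k" using inversions_adj_swap_desc[of j k] j lk by simp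
    then have IH: "in_W n r (strong lam) (\<lambda>l. single ?k' l - straighten ?k' l)"
      using less.hyps k' by blast
    have "?k' ! (j - 1) < ?k' ! j" using j lk by simp
    then have "Pi j l ?k' = (if l = adj_swap j ?k' then 1 else 0)" for l
      by (simp add: Pi_def Let_def adj_swap_def)
    then have rel: "relvec (strong lam) j ?k' l = single k l - chi (strong lam) j * single ?k' l" for l
      using j lk by (simp add: relvec_def single_def)
    have "in_W n r (strong lam) (\<lambda>l. relvec (strong lam) j ?k' l +
        chi (strong lam) j * (single ?k' l - straighten ?k' l))"
      using in_W_relvec[of j r ?k' n] k' j by (intro in_W_add in_W_scale IH) auto
    then show ?thesis
      by (rule in_W_cong)
        (simp add: rel straighten_def Phi_descent[OF _ less.prems j] algebra_simps sum_distrib_left)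
  qed
qed

lemma vec_mod_W:
  assumes x: "supported n r x"
  shows "in_W n r (strong lam)
    (\<lambda>l. x l - (\<Sum>B\<in>beta n r lam. (\<Sum>m\<in>words n r. Phi B m * x m) * single (rep_word n B) l))"
proof -
  have "in_W n r (strong lam) (\<lambda>l. \<Sum>m\<in>words n r. x m * (single m l - straighten m l))"
    by (intro in_W_sum in_W_scale single_mod_W) auto
  then show ?thesis
  proof (rule in_W_cong)
    fix l
    have "(\<Sum>m\<in>words n r. x m * straighten m l) =
        (\<Sum>m\<in>words n r. \<Sum>B\<in>beta n r lam. Phi B m * x m * single (rep_word n B) l)"
      by (simp add: straighten_def sum_distrib_left mult_ac)
    also have "\<dots> = (\<Sum>B\<in>beta n r lam. \<Sum>m\<in>words n r. Phi B m * x m * single (rep_word n B) l)"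
      by (rule sum.swap)
    also have "\<dots> = (\<Sum>B\<in>beta n r lam. (\<Sum>m\<in>words n r. Phi B m * x m) * single (rep_word n B) l)"
      by (simp add: sum_distrib_right)
    finally show "(\<Sum>m\<in>words n r. x m * (single m l - straighten m l)) =
        x l - (\<Sum>B\<in>beta n r lam. (\<Sum>m\<in>words n r. Phi B m * x m) * single (rep_word n B) l)"
      using vec_expand[OF x, of l] by (simp add: right_diff_distrib sum_subtractf)
  qed
qed

lemma yA_mod_W:
  assumes A: "A \<in> beta n r lam"
  shows "in_W n r (strong lam) (\<lambda>l. yA n r A l - single (rep_word n A) l)"
proof -
  have Phi_yA: "(\<Sum>m\<in>words n r. Phi B m * yA n r A m) = (if B = A then 1 else 0)"
    if B: "B \<in> beta n r lam" for B
  proof -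
    have "(\<Sum>m\<in>words n r. Phi B m * yA n r A m) =
        (\<Sum>m\<in>words n r. if m = rep_word n A then (if B = A then 1 else 0) else 0)"
      using yA_Phi[OF A B] by (intro sum.cong) (auto simp: mult.commute)
    then show ?thesis using rep_word_beta_words[OF A] by simp
  qed
  have eq: "(\<Sum>B\<in>beta n r lam. (\<Sum>m\<in>words n r. Phi B m * yA n r A m) * single (rep_word n B) l) =
      single (rep_word n A) l" for l
  proof -
    have "(\<Sum>B\<in>beta n r lam. (\<Sum>m\<in>words n r. Phi B m * yA n r A m) * single (rep_word n B) l) =
        (\<Sum>B\<in>beta n r lam. if B = A then single (rep_word n B) l else 0)"
      using Phi_yA by (intro sum.cong) auto
    then show ?thesis using A by (simp add: sum.delta')
  qed
  have "supported n r (yA n r A)" by (simp add: supported_def yA_def)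
  from vec_mod_W[OF this] show ?thesis by (rule in_W_cong) (simp add: eq)
qed

section \<open>The isomorphism\<close>

lemma Phi_surjective: "\<exists>x. \<forall>B\<in>beta n r lam. (\<Sum>k\<in>words n r. Phi B k * x k) = y B"
proof (intro exI[of _ "\<lambda>k. \<Sum>B'\<in>beta n r lam. single (rep_word n B') k * y B'"] ballI)
  fix B assume B: "B \<in> beta n r lam"
  have "(\<Sum>k\<in>words n r. Phi B k * (\<Sum>B'\<in>beta n r lam. single (rep_word n B') k * y B')) =
      (\<Sum>B'\<in>beta n r lam. y B' * (\<Sum>k\<in>words n r. Phi B k * single (rep_word n B') k))"
    by (rule sum_bilinear_swap)
  also have "\<dots> = (\<Sum>B'\<in>beta n r lam. y B' * Phi B (rep_word n B'))"
    by (simp add: sum_single rep_word_beta_words)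
  also have "\<dots> = (\<Sum>B'\<in>beta n r lam. if B' = B then y B' else 0)"
    using Phi_rep_word[OF B] by (intro sum.cong) auto
  also have "\<dots> = y B" using B by (simp add: sum.delta')
  finally show "(\<Sum>k\<in>words n r. Phi B k * (\<Sum>B'\<in>beta n r lam. single (rep_word n B') k * y B')) = y B" .
qed

lemma Phi_kernel:
  assumes x: "supported n r x"
  shows "(\<forall>B\<in>beta n r lam. (\<Sum>k\<in>words n r. Phi B k * x k) = 0) \<longleftrightarrow> in_W n r (strong lam) x"
proof
  assume "\<forall>B\<in>beta n r lam. (\<Sum>k\<in>words n r. Phi B k * x k) = 0"
  with vec_mod_W[OF x] show "in_W n r (strong lam) x" by simp
next
  assume x: "in_W n r (strong lam) x"
  show "\<forall>B\<in>beta n r lam. (\<Sum>k\<in>words n r. Phi B k * x k) = 0"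
  proof
    fix B assume B: "B \<in> beta n r lam"
    show "(\<Sum>k\<in>words n r. Phi B k * x k) = 0"
      by (rule functional_vanishes_on_W[OF _ x]) (use Phi_relvec[OF B] in auto)
  qed
qed

lemma Phi_rho_vanishes_on_W:
  assumes B: "B \<in> beta n r lam" and g: "g \<in> gens n" and w: "in_W n r (strong lam) w"
  shows "(\<Sum>k\<in>words n r. (\<Sum>l\<in>words n r. Phi B l * rho g l k) * w k) = 0"
proof (rule functional_vanishes_on_W[OF _ w])
  fix i m assume "i \<in> {1..<r}" and m: "m \<in> words n r"
  then have i: "1 \<le> i" "i < r" by auto
  let ?z = "rhov n r g (single m)"
  have "supported n r (single m)" using m by (simp add: supported_def single_def)
  then have "rhov n r g (pi_act i (single m)) = pi_act i ?z" using rhov_pi_act[OF g _ i] by simp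
  then have "rhov n r g (relvec (strong lam) i m) = (\<lambda>l. pi_act i ?z l - chi (strong lam) i * ?z l)"
    unfolding relvec_eq_pi_act[OF m i] rhov_diff_scale by simp
  then have "(\<Sum>k\<in>words n r. (\<Sum>l\<in>words n r. Phi B l * rho g l k) * relvec (strong lam) i m k) =
      (\<Sum>l\<in>words n r. Phi B l * (pi_act i ?z l - chi (strong lam) i * ?z l))"
    using sum_rhov_swap[of "Phi B" n r g "relvec (strong lam) i m"] by simp
  also have "\<dots> = 0" using Phi_pi_act[OF B supported_rhov[OF g] i] .
  finally show "(\<Sum>k\<in>words n r. (\<Sum>l\<in>words n r. Phi B l * rho g l k) * relvec (strong lam) i m k) = 0" .
qed

lemma Phi_rho_expansion:
  assumes B: "B \<in> beta n r lam" and g: "g \<in> gens n" and k: "k \<in> words n r"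
  shows "(\<Sum>l\<in>words n r. Phi B l * rho g l k) =
    (\<Sum>A\<in>beta n r lam. Phi A k * (\<Sum>l\<in>words n r. Phi B l * rho g l (rep_word n A)))"
proof -
  let ?G = "\<lambda>m. \<Sum>l\<in>words n r. Phi B l * rho g l m"
  have "straighten k m = (\<Sum>A\<in>beta n r lam. single (rep_word n A) m * Phi A k)" for m
    by (simp add: straighten_def mult.commute)
  then have "(\<Sum>m\<in>words n r. ?G m * straighten k m) =
      (\<Sum>m\<in>words n r. ?G m * (\<Sum>A\<in>beta n r lam. single (rep_word n A) m * Phi A k))"
    by simp
  also have "\<dots> = (\<Sum>A\<in>beta n r lam. Phi A k * (\<Sum>m\<in>words n r. ?G m * single (rep_word n A) m))"
    by (rule sum_bilinear_swap)
  also have "\<dots> = (\<Sum>A\<in>beta n r lam. Phi A k * ?G (rep_word n A))"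
    using sum_single[OF rep_word_beta_words] by simp
  finally have "(\<Sum>m\<in>words n r. ?G m * straighten k m) = (\<Sum>A\<in>beta n r lam. Phi A k * ?G (rep_word n A))" .
  moreover have "(\<Sum>m\<in>words n r. ?G m * (single k m - straighten k m)) = 0"
    using Phi_rho_vanishes_on_W[OF B g single_mod_W[OF k]] .
  ultimately show ?thesis using sum_single[OF k, of ?G] by (simp add: right_diff_distrib sum_subtractf)
qed

lemma Phi_rho_rep_word:
  assumes A: "A \<in> beta n r lam" and B: "B \<in> beta n r lam" and g: "g \<in> gens n"
  shows "(\<Sum>l\<in>words n r. Phi B l * rho g l (rep_word n A)) = rhov n r g (yA n r A) (rep_word n B)"
proof -
  let ?G = "\<lambda>m. \<Sum>l\<in>words n r. Phi B l * rho g l m"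
  have "(\<Sum>m\<in>words n r. ?G m * (yA n r A m - single (rep_word n A) m)) = 0"
    using Phi_rho_vanishes_on_W[OF B g yA_mod_W[OF A]] .
  then have "?G (rep_word n A) = (\<Sum>m\<in>words n r. ?G m * yA n r A m)"
    using sum_single[OF rep_word_beta_words[OF A], of ?G] by (simp add: right_diff_distrib sum_subtractf)
  also have "\<dots> = (\<Sum>l\<in>words n r. Phi B l * rhov n r g (yA n r A) l)"
    by (rule sum_rhov_swap[symmetric])
  also have "\<dots> = (\<Sum>l\<in>words n r. if l = rep_word n B then rhov n r g (yA n r A) l else 0)"
  proof (intro sum.cong refl)
    fix l assume l: "l \<in> words n r"
    show "Phi B l * rhov n r g (yA n r A) l = (if l = rep_word n B then rhov n r g (yA n r A) l else 0)"
      using Phi_rep_word[OF B B] Phi_rhov_yA_support[OF A B g l] by (cases "l = rep_word n B") auto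
  qed
  also have "\<dots> = rhov n r g (yA n r A) (rep_word n B)" using rep_word_beta_words[OF B] by simp
  finally show ?thesis .
qed

lemma Phi_intertwines:
  assumes g: "g \<in> gens n" and B: "B \<in> beta n r lam" and k: "k \<in> words n r"
  shows "(\<Sum>A\<in>beta n r lam. S_act n r g B A * Phi A k) = (\<Sum>l\<in>words n r. Phi B l * rho g l k)"
proof -
  have "S_act n r g B A * Phi A k = Phi A k * (\<Sum>l\<in>words n r. Phi B l * rho g l (rep_word n A))"
    if A: "A \<in> beta n r lam" for A
  proof -
    have "S_act n r g B A = rhov n r g (yA n r A) (rep_word n B)"
      using S_act_eq[OF conjunct1[OF beta_co[OF A]] g, of B] beta_co[OF A] beta_co[OF B] by simp
    then show ?thesis using Phi_rho_rep_word[OF A B g] by (simp add: mult.commute)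
  qed
  then have "(\<Sum>A\<in>beta n r lam. S_act n r g B A * Phi A k) =
      (\<Sum>A\<in>beta n r lam. Phi A k * (\<Sum>l\<in>words n r. Phi B l * rho g l (rep_word n A)))"
    by (rule sum.cong[OF refl])
  also have "\<dots> = (\<Sum>l\<in>words n r. Phi B l * rho g l k)" using Phi_rho_expansion[OF B g k] by simp
  finally show ?thesis .
qed

end

theorem mainTheorem10:
  fixes n r :: nat and lam :: "nat list"
  assumes "lam \<in> Lambda_bullet n r"
  shows "S_iso_D n r lam (strong lam)"
proof -
  interpret bullet_composition n r lam by (rule bullet_composition.intro[OF assms])
  show ?thesis
    unfolding S_iso_D_def
    by (intro exI[of _ Phi] conjI allI impI ballI Phi_surjective Phi_intertwines)
      (auto simp: Phi_kernel supported_def)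
qed

end
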